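(* Let $q:G'\to G$ be an epimorphism of groups with finite abelian kernel $\Gamma$, let $W$ be a closed connected oriented surface of positive genus with $\pi=\pi_1(W)$ and first Betti number $b=2-\chi(W)$, and let $g:\pi\to G$ be an epimorphism. Then $g$ lifts to $G'$ (i.e. there is a homomorphism $g':\pi\to G'$ with $qg'=g$) if and only if $g_*([W])\in H_2(G;\mathbb{Z})$ lies in the image of $q_*:H_2(G';\mathbb{Z})\to H_2(G;\mathbb{Z})$. Moreover, if $g$ lifts to $G'$, then $$|\mathrm{Hom}_g(\pi,G')|=|\Gamma|^b\,|[\Gamma,G']|^{-1}.$$
   Context: $[W]\in H_2(W;\mathbb{Z})=H_2(\pi;\mathbb{Z})$ is the fundamental class. $\mathrm{Hom}_g(\pi,G')$ is the set of homomorphisms $g':\pi\to G'$ with $qg'=g$. $[\Gamma,G']$ is the subgroup of $\Gamma$ generated by commutators of elements of $\Gamma$ with elements of $G'$. *)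

theory Defs
  imports "HOL-Algebra.Algebra"
begin

definition grp_comm :: "('a, 'm) monoid_scheme \<Rightarrow> 'a \<Rightarrow> 'a \<Rightarrow> 'a" where
  "grp_comm G a b = a \<otimes>\<^bsub>G\<^esub> b \<otimes>\<^bsub>G\<^esub> inv\<^bsub>G\<^esub> a \<otimes>\<^bsub>G\<^esub> inv\<^bsub>G\<^esub> b"

fun surf_rel :: "('a, 'm) monoid_scheme \<Rightarrow> (nat \<Rightarrow> 'a) \<Rightarrow> (nat \<Rightarrow> 'a) \<Rightarrow> nat \<Rightarrow> 'a" where
  "surf_rel G x y 0 = \<one>\<^bsub>G\<^esub>"
| "surf_rel G x y (Suc n) = surf_rel G x y n \<otimes>\<^bsub>G\<^esub> grp_comm G (x n) (y n)"

text \<open>The fundamental group of the closed oriented surface W of genus h is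
  pi = < a_0,b_0,...,a_(h-1),b_(h-1) | [a_0,b_0]...[a_(h-1),b_(h-1)] >.
  A homomorphism pi -> G is thus the same as the tuple (x,y) of images of the
  generators, subject to the surface relation.\<close>
definition surf_hom :: "('a, 'm) monoid_scheme \<Rightarrow> nat \<Rightarrow> ((nat \<Rightarrow> 'a) \<times> (nat \<Rightarrow> 'a)) set" where
  "surf_hom G h = {(x, y). x \<in> {..<h} \<rightarrow>\<^sub>E carrier G \<and> y \<in> {..<h} \<rightarrow>\<^sub>E carrier G
                           \<and> surf_rel G x y h = \<one>\<^bsub>G\<^esub>}"

definition surf_epi :: "('a, 'm) monoid_scheme \<Rightarrow> nat \<Rightarrow> (nat \<Rightarrow> 'a) \<Rightarrow> (nat \<Rightarrow> 'a) \<Rightarrow> bool" where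
  "surf_epi G h x y \<longleftrightarrow> (x, y) \<in> surf_hom G h \<and>
      generate G (x ` {..<h} \<union> y ` {..<h}) = carrier G"

definition lifts :: "('b, 'n) monoid_scheme \<Rightarrow> ('b \<Rightarrow> 'a) \<Rightarrow> nat \<Rightarrow> (nat \<Rightarrow> 'a) \<Rightarrow> (nat \<Rightarrow> 'a)
                      \<Rightarrow> ((nat \<Rightarrow> 'b) \<times> (nat \<Rightarrow> 'b)) set" where
  "lifts G' q h x y = {(x', y') \<in> surf_hom G' h. \<forall>i<h. q (x' i) = x i \<and> q (y' i) = y i}"

definition comm_subgroup :: "('a, 'm) monoid_scheme \<Rightarrow> 'a set \<Rightarrow> 'a set" where
  "comm_subgroup G A = generate G {grp_comm G a b | a b. a \<in> A \<and> b \<in> carrier G}"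

section \<open>Integral group homology in degree 2 via the (inhomogeneous) bar complex\<close>

definition supp :: "('x \<Rightarrow> int) \<Rightarrow> 'x set" where
  "supp c = {p. c p \<noteq> 0}"

definition chains2 :: "('a, 'm) monoid_scheme \<Rightarrow> ('a \<times> 'a \<Rightarrow> int) set" where
  "chains2 G = {c. finite (supp c) \<and> supp c \<subseteq> carrier G \<times> carrier G}"

definition chains3 :: "('a, 'm) monoid_scheme \<Rightarrow> ('a \<times> 'a \<times> 'a \<Rightarrow> int) set" where
  "chains3 G = {c. finite (supp c) \<and> supp c \<subseteq> carrier G \<times> carrier G \<times> carrier G}"

definition bd2 :: "('a, 'm) monoid_scheme \<Rightarrow> ('a \<times> 'a \<Rightarrow> int) \<Rightarrow> ('a \<Rightarrow> int)" where
  "bd2 G c = (\<lambda>z. \<Sum>p\<in>supp c. c p *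
      (of_bool (snd p = z) - of_bool (fst p \<otimes>\<^bsub>G\<^esub> snd p = z) + of_bool (fst p = z)))"

definition bd3 :: "('a, 'm) monoid_scheme \<Rightarrow> ('a \<times> 'a \<times> 'a \<Rightarrow> int) \<Rightarrow> ('a \<times> 'a \<Rightarrow> int)" where
  "bd3 G e = (\<lambda>z. \<Sum>t\<in>supp e. e t *
      (case t of (a, b, c) \<Rightarrow>
         of_bool ((b, c) = z) - of_bool ((a \<otimes>\<^bsub>G\<^esub> b, c) = z)
       + of_bool ((a, b \<otimes>\<^bsub>G\<^esub> c) = z) - of_bool ((a, b) = z)))"

definition cycles2 :: "('a, 'm) monoid_scheme \<Rightarrow> ('a \<times> 'a \<Rightarrow> int) set" where
  "cycles2 G = {c \<in> chains2 G. bd2 G c = (\<lambda>_. 0)}"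

definition push2 :: "('b \<Rightarrow> 'a) \<Rightarrow> ('b \<times> 'b \<Rightarrow> int) \<Rightarrow> ('a \<times> 'a \<Rightarrow> int)" where
  "push2 f c = (\<lambda>z. \<Sum>p\<in>{p \<in> supp c. (f (fst p), f (snd p)) = z}. c p)"

definition in_image_H2 :: "('b, 'n) monoid_scheme \<Rightarrow> ('a, 'm) monoid_scheme \<Rightarrow> ('b \<Rightarrow> 'a)
                            \<Rightarrow> ('a \<times> 'a \<Rightarrow> int) \<Rightarrow> bool" where
  "in_image_H2 G' G q z \<longleftrightarrow>
     (\<exists>c' \<in> cycles2 G'. \<exists>e \<in> chains3 G. (\<lambda>p. z p - push2 q c' p) = bd3 G e)"

text \<open>g_#(fundamental cycle of W), written in terms of the images x_i, y_i of the
  standard generators a_i, b_i. This is the Fox-calculus 2-cycle of the relator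
  w_1...w_(4h) = prod [a_i,b_i]: a letter w_k = s contributes (p_(k-1), s), a letter
  w_k = s^-1 contributes -(p_k, s), where p_k = w_1...w_k. Its class is [W].\<close>
definition surf_cycle :: "('a, 'm) monoid_scheme \<Rightarrow> (nat \<Rightarrow> 'a) \<Rightarrow> (nat \<Rightarrow> 'a) \<Rightarrow> nat
                           \<Rightarrow> ('a \<times> 'a \<Rightarrow> int)" where
  "surf_cycle G x y h = (\<lambda>p. \<Sum>i<h.
      let P = surf_rel G x y i; a = x i; b = y i in
        of_bool (p = (P, a))
      + of_bool (p = (P \<otimes>\<^bsub>G\<^esub> a, b))
      - of_bool (p = (P \<otimes>\<^bsub>G\<^esub> a \<otimes>\<^bsub>G\<^esub> b \<otimes>\<^bsub>G\<^esub> inv\<^bsub>G\<^esub> a, a))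
      - of_bool (p = (surf_rel G x y (Suc i), b)))"

end

theory Submission
  imports Defs "HOL-Algebra.Product_Groups"
begin

text \<open>
  Fix set-theoretic lifts \<open>sect (x i)\<close>, \<open>sect (y i)\<close> of the generators. Every lift of \<open>g\<close>
  is obtained by multiplying them by a tuple \<open>\<gamma>\<close> of \<open>2h\<close> kernel elements, and its relator
  differs from the relator \<open>R\<close> of the fixed lift by a factor \<open>defect \<gamma>\<close>. As \<open>\<Gamma>\<close> is abelian,
  \<open>defect\<close> is a homomorphism \<open>\<Gamma>\<^sup>2\<^sup>h \<rightarrow> \<Gamma>\<close>. Its image is \<open>[\<Gamma>, G']\<close>: each factor is a commutator
  modulo \<open>[\<Gamma>, G']\<close>; conversely the elements \<open>g'\<close> for which every \<open>[k, g']\<close> is a defect form a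
  subgroup containing \<open>\<Gamma>\<close> whose image contains generators of \<open>G\<close>, so it is all of \<open>G'\<close>. Hence
  \<open>g\<close> lifts iff \<open>R \<in> [\<Gamma>, G']\<close>, and then the lifts form a coset of the kernel of \<open>defect\<close>, of size
  \<open>|\<Gamma>|\<^sup>2\<^sup>h / |[\<Gamma>, G']|\<close>.

  Homologically, a lift pushes the fundamental cycle of \<open>G'\<close> forward to \<open>g\<^sub>*[W]\<close>. Conversely,
  the factor set of \<open>sect\<close>, read in \<open>\<Gamma>/[\<Gamma>, G']\<close>, is a 2-cocycle of \<open>G\<close> whose pullback to
  \<open>G'\<close> is a coboundary. Evaluating it therefore kills boundaries and pushforwards of cycles of
  \<open>G'\<close>, while on \<open>g\<^sub>*[W]\<close> it gives the class of \<open>R\<close>.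
\<close>

section \<open>Commutators, conjugation and surface relators\<close>

definition conjug :: "('a, 'm) monoid_scheme \<Rightarrow> 'a \<Rightarrow> 'a \<Rightarrow> 'a" where
  "conjug G g k = g \<otimes>\<^bsub>G\<^esub> k \<otimes>\<^bsub>G\<^esub> inv\<^bsub>G\<^esub> g"

lemma surf_rel_cong:
  "(\<And>i. i < n \<Longrightarrow> x i = x' i \<and> y i = y' i) \<Longrightarrow> surf_rel G x y n = surf_rel G x' y' n"
  by (induction n) auto

context group
begin

lemma mult_inv_cancel_left [simp]:
  "x \<in> carrier G \<Longrightarrow> y \<in> carrier G \<Longrightarrow> x \<otimes> (inv x \<otimes> y) = y"
  by (simp add: m_assoc[symmetric])

lemma inv_mult_cancel_left [simp]:
  "x \<in> carrier G \<Longrightarrow> y \<in> carrier G \<Longrightarrow> inv x \<otimes> (x \<otimes> y) = y"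
  by (simp add: m_assoc[symmetric])

lemma grp_comm_closed [intro, simp]:
  "a \<in> carrier G \<Longrightarrow> b \<in> carrier G \<Longrightarrow> grp_comm G a b \<in> carrier G"
  by (simp add: grp_comm_def)

lemma inv_grp_comm:
  "a \<in> carrier G \<Longrightarrow> b \<in> carrier G \<Longrightarrow> inv (grp_comm G a b) = grp_comm G b a"
  by (simp add: grp_comm_def inv_mult_group m_assoc)

lemma conjug_closed [intro, simp]:
  "g \<in> carrier G \<Longrightarrow> k \<in> carrier G \<Longrightarrow> conjug G g k \<in> carrier G"
  by (simp add: conjug_def)

lemma conjug_one [simp]: "g \<in> carrier G \<Longrightarrow> conjug G g \<one> = \<one>"
  by (simp add: conjug_def)

lemma conjug_mult:
  "g \<in> carrier G \<Longrightarrow> u \<in> carrier G \<Longrightarrow> v \<in> carrier G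
   \<Longrightarrow> conjug G g (u \<otimes> v) = conjug G g u \<otimes> conjug G g v"
  by (simp add: conjug_def m_assoc)

lemma conjug_inv:
  "g \<in> carrier G \<Longrightarrow> u \<in> carrier G \<Longrightarrow> conjug G g (inv u) = inv (conjug G g u)"
  by (simp add: conjug_def m_assoc inv_mult_group)

lemma conjug_conjug:
  "g \<in> carrier G \<Longrightarrow> g' \<in> carrier G \<Longrightarrow> u \<in> carrier G
   \<Longrightarrow> conjug G g (conjug G g' u) = conjug G (g \<otimes> g') u"
  by (simp add: conjug_def m_assoc inv_mult_group)

lemma grp_comm_eq_mult_inv_conjug:
  "k \<in> carrier G \<Longrightarrow> g \<in> carrier G \<Longrightarrow> grp_comm G k g = k \<otimes> inv (conjug G g k)"
  by (simp add: grp_comm_def conjug_def m_assoc inv_mult_group)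

lemma grp_comm_mult_right:
  "k \<in> carrier G \<Longrightarrow> g \<in> carrier G \<Longrightarrow> g' \<in> carrier G
   \<Longrightarrow> grp_comm G k (g \<otimes> g') = grp_comm G k g' \<otimes> grp_comm G (conjug G g' k) g"
  by (simp add: grp_comm_def conjug_def m_assoc inv_mult_group)

lemma grp_comm_inv_right:
  "k \<in> carrier G \<Longrightarrow> g \<in> carrier G
   \<Longrightarrow> grp_comm G k (inv g) = inv (grp_comm G (conjug G (inv g) k) g)"
  by (simp add: grp_comm_def conjug_def m_assoc inv_mult_group)

lemma mult_inv_mult_conjug:
  assumes "s \<in> carrier G" "r \<in> carrier G" "c \<in> carrier G" "d \<in> carrier G"
  shows "s \<otimes> c \<otimes> inv (r \<otimes> d) = s \<otimes> inv r \<otimes> conjug G r (c \<otimes> inv d)"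
  using assms by (simp add: conjug_def m_assoc inv_mult_group)

lemma grp_comm_twist:
  assumes "a \<in> carrier G" "b \<in> carrier G" "u \<in> carrier G" "v \<in> carrier G"
  shows "grp_comm G (a \<otimes> u) (b \<otimes> v) \<otimes> inv (grp_comm G a b)
       = conjug G a u \<otimes> conjug G (a \<otimes> b) v \<otimes> inv (conjug G (a \<otimes> b) u)
         \<otimes> inv (conjug G (a \<otimes> b \<otimes> inv a) v)"
  using assms by (simp add: grp_comm_def conjug_def m_assoc inv_mult_group)

lemma grp_comm_in_subgroup:
  "subgroup H G \<Longrightarrow> a \<in> H \<Longrightarrow> b \<in> H \<Longrightarrow> grp_comm G a b \<in> H"
  by (simp add: grp_comm_def subgroup.m_closed subgroup.m_inv_closed)

lemma in_subgroup_from_conjugates: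
  assumes H: "subgroup H G" and c: "P \<in> carrier G" "x \<in> carrier G" "y \<in> carrier G"
    and in_H: "P \<in> H" "conjug G (P \<otimes> x) y \<in> H" "conjug G (P \<otimes> x \<otimes> y) (inv x) \<in> H"
  shows "x \<in> H \<and> y \<in> H"
proof -
  have conj_H: "conjug G (inv P) u \<in> H" if "u \<in> H" for u
    using that in_H(1) H by (simp add: conjug_def subgroup.m_closed subgroup.m_inv_closed)
  have u: "conjug G x y \<in> H" and v: "conjug G (x \<otimes> y) (inv x) \<in> H"
    using conj_H[OF in_H(2)] conj_H[OF in_H(3)] c by (simp_all add: conjug_conjug m_assoc)
  have "inv (conjug G x y) \<otimes> conjug G (x \<otimes> y) (inv x) = inv (x \<otimes> y)"
    using c by (simp add: conjug_def m_assoc inv_mult_group)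
  then have xy: "inv (x \<otimes> y) \<in> H"
    using u v H by (metis subgroup.m_closed subgroup.m_inv_closed)
  have "inv (x \<otimes> y) \<otimes> conjug G x y = inv x"
    using c by (simp add: conjug_def m_assoc inv_mult_group)
  then have "x \<in> H"
    using xy u H c by (metis inv_inv subgroup.m_closed subgroup.m_inv_closed)
  moreover have "y = inv x \<otimes> inv (inv (x \<otimes> y))"
    using c by (simp add: m_assoc)
  ultimately show ?thesis
    using xy H by (metis subgroup.m_closed subgroup.m_inv_closed)
qed

lemma surf_rel_closed:
  "(\<And>i. i < n \<Longrightarrow> x i \<in> carrier G \<and> y i \<in> carrier G) \<Longrightarrow> surf_rel G x y n \<in> carrier G"
  by (induction n) auto

lemma surf_rel_in_subgroup:
  "subgroup H G \<Longrightarrow> (\<And>i. i < n \<Longrightarrow> x i \<in> H \<and> y i \<in> H) \<Longrightarrow> surf_rel G x y n \<in> H"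
  by (induction n) (auto simp: subgroup.one_closed subgroup.m_closed grp_comm_in_subgroup)

end

context comm_group
begin

lemma grp_comm_eq_one:
  "a \<in> carrier G \<Longrightarrow> b \<in> carrier G \<Longrightarrow> grp_comm G a b = \<one>"
  by (simp add: grp_comm_def m_assoc m_lcomm[of b "inv a"])

lemma mult_inv_inv_interchange:
  assumes "a \<in> carrier G" "a' \<in> carrier G" "b \<in> carrier G" "b' \<in> carrier G"
    "c \<in> carrier G" "c' \<in> carrier G" "d \<in> carrier G" "d' \<in> carrier G"
  shows "(a \<otimes> a') \<otimes> (b \<otimes> b') \<otimes> inv (c \<otimes> c') \<otimes> inv (d \<otimes> d')
       = (a \<otimes> b \<otimes> inv c \<otimes> inv d) \<otimes> (a' \<otimes> b' \<otimes> inv c' \<otimes> inv d')"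
  using assms by (simp add: m_ac inv_mult)

lemma mult_inv_mult_inv_eq_one:
  assumes "u1 \<in> carrier G" "u2 \<in> carrier G" "u3 \<in> carrier G" "u4 \<in> carrier G"
    and "u1 \<otimes> u2 = u3 \<otimes> u4"
  shows "u3 \<otimes> inv u2 \<otimes> u4 \<otimes> inv u1 = \<one>"
proof -
  have "u3 \<otimes> inv u2 \<otimes> u4 \<otimes> inv u1 = (u3 \<otimes> u4) \<otimes> inv (u1 \<otimes> u2)"
    using assms(1-4) by (simp add: m_ac inv_mult)
  also have "\<dots> = (u3 \<otimes> u4) \<otimes> inv (u3 \<otimes> u4)"
    by (simp only: assms(5))
  finally show ?thesis
    using assms by simp
qed

end

context group_hom
begin

lemma hom_grp_comm:
  "a \<in> carrier G \<Longrightarrow> b \<in> carrier G \<Longrightarrow> h (grp_comm G a b) = grp_comm H (h a) (h b)"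
  by (simp add: grp_comm_def)

lemma hom_surf_rel:
  "(\<And>i. i < n \<Longrightarrow> x i \<in> carrier G \<and> y i \<in> carrier G)
   \<Longrightarrow> h (surf_rel G x y n) = surf_rel H (\<lambda>i. h (x i)) (\<lambda>i. h (y i)) n"
  by (induction n) (simp_all add: G.surf_rel_closed hom_grp_comm)

lemma fiber_eq_kernel_rcoset:
  assumes a: "a \<in> carrier G"
  shows "{g \<in> carrier G. h g = h a} = kernel G H h #> a"
proof -
  have "g \<in> kernel G H h #> a \<longleftrightarrow> g \<in> carrier G \<and> h g = h a" for g
  proof -
    have "g \<in> kernel G H h #> a \<longleftrightarrow> g \<in> carrier G \<and> g \<otimes> inv a \<in> kernel G H h"
      using subgroup.rcos_module[OF subgroup_kernel G.group_axioms a] G.r_coset_subset_G[of _ a]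
        subgroup.subset[OF subgroup_kernel] a by blast
    also have "\<dots> \<longleftrightarrow> g \<in> carrier G \<and> h g = h a"
      using a by (auto simp: kernel_def H.inv_solve_right')
    finally show ?thesis .
  qed
  then show ?thesis by blast
qed

lemma card_fiber:
  "a \<in> carrier G \<Longrightarrow> card {g \<in> carrier G. h g = h a} = card (kernel G H h)"
  unfolding fiber_eq_kernel_rcoset
  using G.card_rcosets_equal[OF G.rcosetsI subgroup.subset[OF subgroup_kernel]]
    subgroup.subset[OF subgroup_kernel] by metis

lemma card_image_mult_card_kernel:
  assumes "finite (carrier G)"
  shows "card (h ` carrier G) * card (kernel G H h) = card (carrier G)"
proof -
  have "carrier G = (\<Union>c\<in>h ` carrier G. {g \<in> carrier G. h g = c})" by auto
  then have "card (carrier G) = (\<Sum>c\<in>h ` carrier G. card {g \<in> carrier G. h g = c})"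
    by (subst card_UN_disjoint[symmetric]) (use assms in auto)
  also have "\<dots> = (\<Sum>c\<in>h ` carrier G. card (kernel G H h))"
    by (rule sum.cong) (auto simp: card_fiber)
  finally show ?thesis by simp
qed

end

section \<open>Integral chains\<close>

lemma finite_supp_delta [simp]:
  "finite (supp (\<lambda>p. of_bool (p = t) :: int))" "finite (supp (\<lambda>p. of_bool (t = p) :: int))"
  by (auto intro: finite_subset[of _ "{t}"] simp: supp_def)

lemma finite_supp_add [simp]:
  "finite (supp c) \<Longrightarrow> finite (supp d) \<Longrightarrow> finite (supp (\<lambda>p. c p + d p))"
  by (auto intro: finite_subset[of _ "supp c \<union> supp d"] simp: supp_def)

lemma finite_supp_diff [simp]:
  "finite (supp c) \<Longrightarrow> finite (supp d) \<Longrightarrow> finite (supp (\<lambda>p. c p - d p))"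
  by (auto intro: finite_subset[of _ "supp c \<union> supp d"] simp: supp_def)

lemma finite_supp_scale [simp]: "finite (supp c) \<Longrightarrow> finite (supp (\<lambda>p. n * c p))"
  by (auto intro: finite_subset[of _ "supp c"] simp: supp_def)

lemma finite_supp_sum:
  "finite I \<Longrightarrow> (\<And>i. i \<in> I \<Longrightarrow> finite (supp (f i))) \<Longrightarrow> finite (supp (\<lambda>p. \<Sum>i\<in>I. f i p))"
  by (rule finite_subset[of _ "\<Union>i\<in>I. supp (f i)"])
     (auto simp: supp_def intro: ccontr dest: sum.neutral)

definition chain_eval :: "('c, 'd) monoid_scheme \<Rightarrow> ('x \<Rightarrow> 'c) \<Rightarrow> ('x \<Rightarrow> int) \<Rightarrow> 'c" where
  "chain_eval Q w c = (\<Otimes>\<^bsub>Q\<^esub>p\<in>supp c. w p [^]\<^bsub>Q\<^esub> c p)"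

context comm_group
begin

context
  fixes w :: "'x \<Rightarrow> 'a"
  assumes w: "\<And>p. w p \<in> carrier G"
begin

lemma chain_eval_closed: "chain_eval G w c \<in> carrier G"
  unfolding chain_eval_def using w by (intro finprod_closed) auto

lemma chain_eval_superset:
  "finite S \<Longrightarrow> supp c \<subseteq> S \<Longrightarrow> chain_eval G w c = (\<Otimes>p\<in>S. w p [^] c p)"
  unfolding chain_eval_def
  by (rule finprod_mono_neutral_cong_left) (use w in \<open>auto simp: supp_def\<close>)

lemma chain_eval_zero: "chain_eval G w (\<lambda>p. 0) = \<one>"
  by (simp add: chain_eval_def supp_def)

lemma chain_eval_delta: "chain_eval G w (\<lambda>p. of_bool (p = t)) = w t"
  and chain_eval_delta': "chain_eval G w (\<lambda>p. of_bool (t = p)) = w t"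
proof -
  have "supp (\<lambda>p. of_bool (p = t) :: int) = {t}" "supp (\<lambda>p. of_bool (t = p) :: int) = {t}"
    by (auto simp: supp_def)
  then show "chain_eval G w (\<lambda>p. of_bool (p = t)) = w t" "chain_eval G w (\<lambda>p. of_bool (t = p)) = w t"
    using w by (simp_all add: chain_eval_def)
qed

lemma chain_eval_add:
  assumes c: "finite (supp c)" and d: "finite (supp d)"
  shows "chain_eval G w (\<lambda>p. c p + d p) = chain_eval G w c \<otimes> chain_eval G w d"
proof -
  let ?S = "supp c \<union> supp d"
  have S: "finite ?S" using c d by simp
  have "chain_eval G w (\<lambda>p. c p + d p) = (\<Otimes>p\<in>?S. w p [^] (c p + d p))"
    by (rule chain_eval_superset[OF S]) (auto simp: supp_def)
  also have "\<dots> = (\<Otimes>p\<in>?S. w p [^] c p \<otimes> w p [^] d p)"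
    using w by (intro finprod_cong') (auto simp: int_pow_mult)
  also have "\<dots> = (\<Otimes>p\<in>?S. w p [^] c p) \<otimes> (\<Otimes>p\<in>?S. w p [^] d p)"
    using w by (intro finprod_multf) auto
  also have "\<dots> = chain_eval G w c \<otimes> chain_eval G w d"
    using chain_eval_superset[OF S, of c] chain_eval_superset[OF S, of d] by simp
  finally show ?thesis .
qed

lemma chain_eval_scale:
  assumes c: "finite (supp c)"
  shows "chain_eval G w (\<lambda>p. n * c p) = chain_eval G w c [^] n"
proof -
  have "chain_eval G w (\<lambda>p. n * c p) = (\<Otimes>p\<in>supp c. w p [^] (n * c p))"
    by (rule chain_eval_superset[OF c]) (auto simp: supp_def)
  also have "\<dots> = (\<Otimes>p\<in>supp c. (w p [^] c p) [^] n)"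
    using w by (intro finprod_cong') (auto simp: int_pow_pow mult.commute)
  also have "\<dots> = chain_eval G w c [^] n"
    unfolding chain_eval_def using c
    by (induction rule: finite_induct) (auto simp: w finprod_insert int_pow_distrib)
  finally show ?thesis .
qed

lemma chain_eval_diff:
  assumes "finite (supp c)" "finite (supp d)"
  shows "chain_eval G w (\<lambda>p. c p - d p) = chain_eval G w c \<otimes> inv chain_eval G w d"
proof -
  have "chain_eval G w (\<lambda>p. c p - d p) = chain_eval G w (\<lambda>p. c p + (-1) * d p)"
    by simp
  also have "\<dots> = chain_eval G w c \<otimes> chain_eval G w d [^] (-1::int)"
    using assms by (simp only: chain_eval_add finite_supp_scale chain_eval_scale)
  finally show ?thesis
    using chain_eval_closed by (simp add: int_pow_neg)
qed

lemma chain_eval_sum: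
  assumes "finite I" "\<And>i. i \<in> I \<Longrightarrow> finite (supp (f i))"
  shows "chain_eval G w (\<lambda>p. \<Sum>i\<in>I. f i p) = (\<Otimes>i\<in>I. chain_eval G w (f i))"
  using assms
proof (induction rule: finite_induct)
  case empty
  then show ?case by (simp add: chain_eval_zero)
next
  case (insert a A)
  then show ?case
    by (simp add: chain_eval_add finite_supp_sum finprod_insert chain_eval_closed)
qed

lemma chain_eval_sum_scaled:
  assumes "finite S" "\<And>t. finite (supp (F t))"
  shows "chain_eval G w (\<lambda>z. \<Sum>t\<in>S. c t * F t z) = (\<Otimes>t\<in>S. chain_eval G w (F t) [^] c t)"
proof -
  have "chain_eval G w (\<lambda>z. \<Sum>t\<in>S. c t * F t z) = (\<Otimes>t\<in>S. chain_eval G w (\<lambda>z. c t * F t z))"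
    using assms by (intro chain_eval_sum) auto
  also have "\<dots> = (\<Otimes>t\<in>S. chain_eval G w (F t) [^] c t)"
    using assms chain_eval_closed by (intro finprod_cong') (auto simp: chain_eval_scale)
  finally show ?thesis .
qed

end

end

definition quad_chain :: "'i set \<Rightarrow> ('i \<Rightarrow> 'x) \<Rightarrow> ('i \<Rightarrow> 'x) \<Rightarrow> ('i \<Rightarrow> 'x) \<Rightarrow> ('i \<Rightarrow> 'x) \<Rightarrow> 'x \<Rightarrow> int" where
  "quad_chain I A B C D =
     (\<lambda>p. \<Sum>i\<in>I. of_bool (p = A i) + of_bool (p = B i) - of_bool (p = C i) - of_bool (p = D i))"

lemma quad_chain_cong:
  "(\<And>i. i \<in> I \<Longrightarrow> A i = A' i \<and> B i = B' i \<and> C i = C' i \<and> D i = D' i)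
   \<Longrightarrow> quad_chain I A B C D = quad_chain I A' B' C' D'"
  by (simp add: quad_chain_def cong: sum.cong)

lemma supp_quad_chain: "supp (quad_chain I A B C D) \<subseteq> A ` I \<union> B ` I \<union> C ` I \<union> D ` I"
proof
  fix p assume "p \<in> supp (quad_chain I A B C D)"
  then obtain i where "i \<in> I"
    "of_bool (p = A i) + of_bool (p = B i) - of_bool (p = C i) - of_bool (p = D i) \<noteq> (0::int)"
    unfolding supp_def quad_chain_def by (auto elim: sum.not_neutral_contains_not_neutral)
  then have "p = A i \<or> p = B i \<or> p = C i \<or> p = D i"
    by (cases "p = A i \<or> p = B i \<or> p = C i \<or> p = D i") auto
  then show "p \<in> A ` I \<union> B ` I \<union> C ` I \<union> D ` I" using \<open>i \<in> I\<close> by blast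
qed

lemma finite_supp_quad_chain: "finite I \<Longrightarrow> finite (supp (quad_chain I A B C D))"
  by (rule finite_subset[OF supp_quad_chain]) auto

lemma sum_supp_quad_chain:
  fixes F :: "'x \<Rightarrow> int"
  assumes I: "finite I"
  shows "(\<Sum>p\<in>supp (quad_chain I A B C D). quad_chain I A B C D p * F p)
       = (\<Sum>i\<in>I. F (A i) + F (B i) - F (C i) - F (D i))"
proof -
  let ?S = "A ` I \<union> B ` I \<union> C ` I \<union> D ` I"
  have S: "finite ?S" using I by auto
  have delta: "(\<Sum>p\<in>?S. of_bool (p = t) * F p) = F t" if "t \<in> ?S" for t
  proof -
    have "?S \<inter> {p. p = t} = {t}" using that by auto
    then show ?thesis using S by simp
  qed
  have "(\<Sum>p\<in>supp (quad_chain I A B C D). quad_chain I A B C D p * F p)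
      = (\<Sum>p\<in>?S. quad_chain I A B C D p * F p)"
    by (rule sum.mono_neutral_left[OF S supp_quad_chain]) (auto simp: supp_def)
  also have "\<dots> = (\<Sum>i\<in>I. \<Sum>p\<in>?S. (of_bool (p = A i) + of_bool (p = B i)
                                     - of_bool (p = C i) - of_bool (p = D i)) * F p)"
    by (simp add: quad_chain_def sum_distrib_right sum.swap[of _ ?S])
  also have "\<dots> = (\<Sum>i\<in>I. F (A i) + F (B i) - F (C i) - F (D i))"
    by (rule sum.cong[OF refl])
      (simp add: distrib_right left_diff_distrib sum.distrib sum_subtractf delta)
  finally show ?thesis .
qed

lemma (in comm_group) chain_eval_quad_chain:
  assumes w: "\<And>p. w p \<in> carrier G" and I: "finite I"
  shows "chain_eval G w (quad_chain I A B C D)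
       = (\<Otimes>i\<in>I. w (A i) \<otimes> w (B i) \<otimes> inv (w (C i)) \<otimes> inv (w (D i)))"
proof -
  have "chain_eval G w (quad_chain I A B C D) = (\<Otimes>i\<in>I. chain_eval G w
          (\<lambda>p. of_bool (p = A i) + of_bool (p = B i) - of_bool (p = C i) - of_bool (p = D i)))"
    unfolding quad_chain_def by (rule chain_eval_sum[OF w I]) simp
  also have "\<dots> = (\<Otimes>i\<in>I. w (A i) \<otimes> w (B i) \<otimes> inv (w (C i)) \<otimes> inv (w (D i)))"
    using w by (intro finprod_cong') (simp_all add: chain_eval_add chain_eval_diff chain_eval_delta)
  finally show ?thesis .
qed

lemma surf_cycle_eq_quad_chain:
  "surf_cycle G x y n = quad_chain {..<n}
     (\<lambda>i. (surf_rel G x y i, x i))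
     (\<lambda>i. (surf_rel G x y i \<otimes>\<^bsub>G\<^esub> x i, y i))
     (\<lambda>i. (surf_rel G x y i \<otimes>\<^bsub>G\<^esub> x i \<otimes>\<^bsub>G\<^esub> y i \<otimes>\<^bsub>G\<^esub> inv\<^bsub>G\<^esub> x i, x i))
     (\<lambda>i. (surf_rel G x y (Suc i), y i))"
  by (simp add: surf_cycle_def quad_chain_def Let_def)

lemma surf_cycle_cong:
  "(\<And>i. i < n \<Longrightarrow> x i = x' i \<and> y i = y' i) \<Longrightarrow> surf_cycle G x y n = surf_cycle G x' y' n"
proof -
  assume xy: "\<And>i. i < n \<Longrightarrow> x i = x' i \<and> y i = y' i"
  have "surf_rel G x y i = surf_rel G x' y' i" if "i \<le> n" for i
    using xy that by (intro surf_rel_cong) auto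
  then show ?thesis
    unfolding surf_cycle_eq_quad_chain using xy by (intro quad_chain_cong) simp
qed

lemma finite_supp_surf_cycle: "finite (supp (surf_cycle G x y n))"
  unfolding surf_cycle_eq_quad_chain by (rule finite_supp_quad_chain) simp

lemma (in group) bd2_surf_cycle_block:
  fixes z :: 'a
  assumes "P \<in> carrier G" "a \<in> carrier G" "b \<in> carrier G"
  defines "F \<equiv> \<lambda>p. of_bool (snd p = z) - of_bool (fst p \<otimes> snd p = z) + of_bool (fst p = z) :: int"
  shows "F (P, a) + F (P \<otimes> a, b) - F (P \<otimes> a \<otimes> b \<otimes> inv a, a) - F (P \<otimes> grp_comm G a b, b)
       = of_bool (P = z) - of_bool (P \<otimes> grp_comm G a b = z)"
proof -
  have "P \<otimes> a \<otimes> b \<otimes> inv a \<otimes> a = P \<otimes> a \<otimes> b"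
    "P \<otimes> grp_comm G a b \<otimes> b = P \<otimes> a \<otimes> b \<otimes> inv a"
    using assms by (simp_all add: m_assoc grp_comm_def)
  then show ?thesis unfolding F_def by simp
qed

lemma (in group) surf_cycle_in_cycles2:
  assumes xy: "\<And>i. i < n \<Longrightarrow> x i \<in> carrier G \<and> y i \<in> carrier G"
    and rel: "surf_rel G x y n = \<one>"
  shows "surf_cycle G x y n \<in> cycles2 G"
proof -
  have P: "i \<le> n \<Longrightarrow> surf_rel G x y i \<in> carrier G" for i
    using xy by (intro surf_rel_closed) auto
  have "supp (surf_cycle G x y n) \<subseteq> carrier G \<times> carrier G"
    unfolding surf_cycle_eq_quad_chain
    by (rule subset_trans[OF supp_quad_chain]) (use xy P in \<open>auto simp: Suc_le_eq\<close>)
  moreover have "bd2 G (surf_cycle G x y n) z = 0" for z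
  proof -
    have "bd2 G (surf_cycle G x y n) z
        = (\<Sum>i<n. of_bool (surf_rel G x y i = z) - of_bool (surf_rel G x y (Suc i) = z))"
      unfolding bd2_def surf_cycle_eq_quad_chain sum_supp_quad_chain[OF finite_lessThan]
      apply (intro sum.cong refl)
      subgoal for i
        using bd2_surf_cycle_block[of "surf_rel G x y i" "x i" "y i" z] xy[of i] P[of i] by simp
      done
    also have "\<dots> = of_bool (surf_rel G x y 0 = z) - of_bool (surf_rel G x y n = z)"
      by (rule sum_lessThan_telescope')
    finally show ?thesis using rel by simp
  qed
  ultimately show ?thesis
    by (auto simp: cycles2_def chains2_def finite_supp_surf_cycle)
qed

lemma push2_eq_sum:
  "finite (supp c) \<Longrightarrow> push2 f c z = (\<Sum>p\<in>supp c. c p * of_bool ((f (fst p), f (snd p)) = z))"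
  unfolding push2_def by (simp add: sum.inter_filter if_distrib of_bool_def cong: if_cong)

lemma finite_supp_push2:
  assumes "finite (supp c)"
  shows "finite (supp (push2 f c))"
proof (rule finite_subset)
  show "supp (push2 f c) \<subseteq> (\<lambda>p. (f (fst p), f (snd p))) ` supp c"
  proof
    fix z assume z: "z \<in> supp (push2 f c)"
    have "{p \<in> supp c. (f (fst p), f (snd p)) = z} \<noteq> {}"
    proof
      assume "{p \<in> supp c. (f (fst p), f (snd p)) = z} = {}"
      then have "push2 f c z = 0"
        by (simp only: push2_def sum.empty)
      with z show False by (simp add: supp_def)
    qed
    then show "z \<in> (\<lambda>p. (f (fst p), f (snd p))) ` supp c" by blast
  qed
qed (use assms in simp)

lemma push2_quad_chain:
  assumes "finite I"
  shows "push2 f (quad_chain I A B C D) = quad_chain I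
     (\<lambda>i. (f (fst (A i)), f (snd (A i)))) (\<lambda>i. (f (fst (B i)), f (snd (B i))))
     (\<lambda>i. (f (fst (C i)), f (snd (C i)))) (\<lambda>i. (f (fst (D i)), f (snd (D i))))"
proof
  fix z
  show "push2 f (quad_chain I A B C D) z = quad_chain I
     (\<lambda>i. (f (fst (A i)), f (snd (A i)))) (\<lambda>i. (f (fst (B i)), f (snd (B i))))
     (\<lambda>i. (f (fst (C i)), f (snd (C i)))) (\<lambda>i. (f (fst (D i)), f (snd (D i)))) z"
    unfolding push2_eq_sum[OF finite_supp_quad_chain[OF assms]] sum_supp_quad_chain[OF assms]
    by (simp add: quad_chain_def eq_commute)
qed

lemma (in group_hom) push2_surf_cycle:
  assumes "\<And>i. i < n \<Longrightarrow> x i \<in> carrier G \<and> y i \<in> carrier G"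
  shows "push2 h (surf_cycle G x y n) = surf_cycle H (\<lambda>i. h (x i)) (\<lambda>i. h (y i)) n"
proof -
  have "h (surf_rel G x y i) = surf_rel H (\<lambda>i. h (x i)) (\<lambda>i. h (y i)) i"
    and "surf_rel G x y i \<in> carrier G" if "i \<le> n" for i
    using assms that by (auto intro: hom_surf_rel G.surf_rel_closed)
  then show ?thesis
    unfolding surf_cycle_eq_quad_chain push2_quad_chain[OF finite_lessThan]
    by (intro quad_chain_cong) (simp add: assms grp_comm_def)
qed

lemma (in group_hom) in_image_H2_of_lift:
  assumes "(x', y') \<in> lifts G h n x y"
  shows "in_image_H2 G H h (surf_cycle H x y n)"
proof -
  have xy': "\<And>i. i < n \<Longrightarrow> x' i \<in> carrier G \<and> y' i \<in> carrier G"
    and rel: "surf_rel G x' y' n = \<one>"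
    and lift: "\<And>i. i < n \<Longrightarrow> h (x' i) = x i \<and> h (y' i) = y i"
    using assms by (auto simp: lifts_def surf_hom_def PiE_iff)
  have "surf_cycle H (\<lambda>i. h (x' i)) (\<lambda>i. h (y' i)) n = surf_cycle H x y n"
    by (rule surf_cycle_cong) (use lift in auto)
  then have push: "push2 h (surf_cycle G x' y' n) = surf_cycle H x y n"
    by (simp only: push2_surf_cycle[OF xy'])
  have "(\<lambda>_. 0) \<in> chains3 H" "bd3 H (\<lambda>_. 0) = (\<lambda>_. 0)"
    by (simp_all add: chains3_def bd3_def supp_def)
  then show ?thesis
    unfolding in_image_H2_def using G.surf_cycle_in_cycles2[OF xy' rel] push
    by (intro bexI[of _ "surf_cycle G x' y' n"] bexI[of _ "\<lambda>_. 0"]) auto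
qed

section \<open>Extensions with abelian kernel\<close>

text \<open>\<open>E\<close> plays the role of \<open>G'\<close>; below \<open>K\<close>, \<open>C\<close> and \<open>Q\<close> are \<open>\<Gamma>\<close>, \<open>[\<Gamma>, G']\<close> and
  \<open>\<Gamma>/[\<Gamma>, G']\<close>, with quotient map \<open>cls\<close>.\<close>

locale abelian_extension = E: group E + G: group G
  for E :: "('b, 'n) monoid_scheme" and G :: "('a, 'm) monoid_scheme" +
  fixes q :: "'b \<Rightarrow> 'a"
  assumes q_hom: "q \<in> hom E G"
    and q_onto: "q ` carrier E = carrier G"
    and finite_kernel: "finite (kernel E G q)"
    and comm_group_kernel: "comm_group (E\<lparr>carrier := kernel E G q\<rparr>)"
begin

sublocale q: group_hom E G q
  by unfold_locales (rule q_hom)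

abbreviation "K \<equiv> kernel E G q"
abbreviation "C \<equiv> comm_subgroup E K"
abbreviation "KE \<equiv> E\<lparr>carrier := K\<rparr>"

lemma in_kernel_iff: "k \<in> K \<longleftrightarrow> k \<in> carrier E \<and> q k = \<one>\<^bsub>G\<^esub>"
  by (simp add: kernel_def)

lemma kernel_subgroup: "subgroup K E"
  by (rule q.subgroup_kernel)

lemma kernel_closed [intro]: "k \<in> K \<Longrightarrow> k \<in> carrier E"
  by (simp add: in_kernel_iff)

lemma kernel_one [intro, simp]: "\<one>\<^bsub>E\<^esub> \<in> K"
  and kernel_mult [intro]: "a \<in> K \<Longrightarrow> b \<in> K \<Longrightarrow> a \<otimes>\<^bsub>E\<^esub> b \<in> K"
  and kernel_inv [intro]: "a \<in> K \<Longrightarrow> inv\<^bsub>E\<^esub> a \<in> K"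
  and kernel_conjug [intro]: "g \<in> carrier E \<Longrightarrow> a \<in> K \<Longrightarrow> conjug E g a \<in> K"
  by (auto simp: in_kernel_iff conjug_def)

lemma KE_inv: "a \<in> K \<Longrightarrow> inv\<^bsub>KE\<^esub> a = inv\<^bsub>E\<^esub> a"
  by (rule E.m_inv_consistent[OF kernel_subgroup])

lemma kernel_commute: "a \<in> K \<Longrightarrow> b \<in> K \<Longrightarrow> a \<otimes>\<^bsub>E\<^esub> b = b \<otimes>\<^bsub>E\<^esub> a"
  using comm_monoid.m_comm[OF comm_group.axioms(1)[OF comm_group_kernel], of a b] by simp

lemma kernel_lcommute:
  "a \<in> K \<Longrightarrow> b \<in> K \<Longrightarrow> c \<in> K \<Longrightarrow> a \<otimes>\<^bsub>E\<^esub> (b \<otimes>\<^bsub>E\<^esub> c) = b \<otimes>\<^bsub>E\<^esub> (a \<otimes>\<^bsub>E\<^esub> c)"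
  by (metis E.m_assoc kernel_closed kernel_commute)

lemma kernel_interchange:
  assumes "a \<in> K" "a' \<in> K" "b \<in> K" "b' \<in> K" "c \<in> K" "c' \<in> K" "d \<in> K" "d' \<in> K"
  shows "(a \<otimes>\<^bsub>E\<^esub> a') \<otimes>\<^bsub>E\<^esub> (b \<otimes>\<^bsub>E\<^esub> b') \<otimes>\<^bsub>E\<^esub> inv\<^bsub>E\<^esub> (c \<otimes>\<^bsub>E\<^esub> c')
           \<otimes>\<^bsub>E\<^esub> inv\<^bsub>E\<^esub> (d \<otimes>\<^bsub>E\<^esub> d')
       = (a \<otimes>\<^bsub>E\<^esub> b \<otimes>\<^bsub>E\<^esub> inv\<^bsub>E\<^esub> c \<otimes>\<^bsub>E\<^esub> inv\<^bsub>E\<^esub> d)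
           \<otimes>\<^bsub>E\<^esub> (a' \<otimes>\<^bsub>E\<^esub> b' \<otimes>\<^bsub>E\<^esub> inv\<^bsub>E\<^esub> c' \<otimes>\<^bsub>E\<^esub> inv\<^bsub>E\<^esub> d')"
  using comm_group.mult_inv_inv_interchange[OF comm_group_kernel, of a a' b b' c c' d d'] assms
  by (simp add: KE_inv kernel_mult)

lemma grp_comm_in_kernel: "a \<in> K \<Longrightarrow> g \<in> carrier E \<Longrightarrow> grp_comm E a g \<in> K"
  by (subst E.grp_comm_eq_mult_inv_conjug) auto

lemma C_subgroup: "subgroup C E"
  unfolding comm_subgroup_def
  by (rule E.generate_is_subgroup) auto

lemma C_subset_kernel: "C \<subseteq> K"
  unfolding comm_subgroup_def
  by (rule E.generate_subgroup_incl[OF _ kernel_subgroup]) (auto intro: grp_comm_in_kernel)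

lemma grp_comm_in_C: "a \<in> K \<Longrightarrow> g \<in> carrier E \<Longrightarrow> grp_comm E a g \<in> C"
  unfolding comm_subgroup_def by (rule generate.incl) blast

lemma C_subgroup_KE: "subgroup C KE"
  using E.subgroup_incl[OF C_subgroup kernel_subgroup C_subset_kernel] .

lemma group_KE: "group KE"
  using comm_group_kernel by (rule comm_group.axioms(2))

definition Q :: "'b set monoid" where
  "Q = KE Mod C"

lemma comm_group_Q: "comm_group Q"
  unfolding Q_def by (rule comm_group.abelian_FactGroup[OF comm_group_kernel C_subgroup_KE])

lemma group_Q: "group Q"
  using comm_group_Q by (rule comm_group.axioms(2))

definition cls :: "'b \<Rightarrow> 'b set" where
  "cls k = C #>\<^bsub>KE\<^esub> k"

lemma cls_group_hom: "group_hom KE Q cls"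
proof -
  have "C \<lhd> KE"
    using comm_group.normal_iff_subgroup[OF comm_group_kernel] C_subgroup_KE by blast
  then show ?thesis
    unfolding group_hom_def group_hom_axioms_def cls_def[abs_def] Q_def
    using group_KE group_Q[unfolded Q_def] normal.r_coset_hom_Mod by blast
qed

lemma cls_closed [intro]: "k \<in> K \<Longrightarrow> cls k \<in> carrier Q"
  using group_hom.hom_closed[OF cls_group_hom] by simp

lemma cls_mult: "a \<in> K \<Longrightarrow> b \<in> K \<Longrightarrow> cls (a \<otimes>\<^bsub>E\<^esub> b) = cls a \<otimes>\<^bsub>Q\<^esub> cls b"
  using group_hom.hom_mult[OF cls_group_hom, of a b] by simp

lemma cls_inv: "a \<in> K \<Longrightarrow> cls (inv\<^bsub>E\<^esub> a) = inv\<^bsub>Q\<^esub> cls a"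
  using group_hom.hom_inv[OF cls_group_hom, of a] by (simp add: KE_inv)

lemma cls_one: "cls \<one>\<^bsub>E\<^esub> = \<one>\<^bsub>Q\<^esub>"
  using group_hom.hom_one[OF cls_group_hom] by simp

lemma cls_eq_one_iff: "a \<in> K \<Longrightarrow> cls a = \<one>\<^bsub>Q\<^esub> \<longleftrightarrow> a \<in> C"
  using group.rcos_self[OF group_KE _ C_subgroup_KE] subgroup.rcos_const[OF C_subgroup_KE group_KE]
  by (auto simp: cls_def Q_def)

lemma cls_conjug: "g \<in> carrier E \<Longrightarrow> k \<in> K \<Longrightarrow> cls (conjug E g k) = cls k"
proof -
  assume g: "g \<in> carrier E" and k: "k \<in> K"
  have "conjug E g k = grp_comm E g k \<otimes>\<^bsub>E\<^esub> k"
    using g kernel_closed[OF k] by (simp add: grp_comm_def conjug_def E.m_assoc)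
  moreover have gk: "grp_comm E g k \<in> C"
    using subgroup.m_inv_closed[OF C_subgroup grp_comm_in_C[OF k g]] g kernel_closed[OF k]
    by (simp add: E.inv_grp_comm)
  moreover have "cls (grp_comm E g k) = \<one>\<^bsub>Q\<^esub>"
    using gk C_subset_kernel cls_eq_one_iff by blast
  ultimately show ?thesis
    using gk k C_subset_kernel monoid.l_one[OF group.is_monoid[OF group_Q] cls_closed[OF k]]
    by (simp add: cls_mult subset_iff)
qed

definition sect :: "'a \<Rightarrow> 'b" where
  "sect a = inv_into (carrier E) q a"

lemma sect_closed [intro, simp]: "a \<in> carrier G \<Longrightarrow> sect a \<in> carrier E"
  unfolding sect_def using q_onto by (metis inv_into_into)

lemma q_sect [simp]: "a \<in> carrier G \<Longrightarrow> q (sect a) = a"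
  unfolding sect_def using q_onto by (metis f_inv_into_f)

interpretation Q: comm_group Q
  by (rule comm_group_Q)

definition factor_set :: "'a \<Rightarrow> 'a \<Rightarrow> 'b" where
  "factor_set a b = sect a \<otimes>\<^bsub>E\<^esub> sect b \<otimes>\<^bsub>E\<^esub> inv\<^bsub>E\<^esub> sect (a \<otimes>\<^bsub>G\<^esub> b)"

lemma factor_set_in_kernel: "a \<in> carrier G \<Longrightarrow> b \<in> carrier G \<Longrightarrow> factor_set a b \<in> K"
  by (simp add: factor_set_def in_kernel_iff)

lemma factor_set_cocycle:
  assumes "a \<in> carrier G" "b \<in> carrier G" "c \<in> carrier G"
  shows "factor_set a b \<otimes>\<^bsub>E\<^esub> factor_set (a \<otimes>\<^bsub>G\<^esub> b) c
       = conjug E (sect a) (factor_set b c) \<otimes>\<^bsub>E\<^esub> factor_set a (b \<otimes>\<^bsub>G\<^esub> c)"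
  using assms by (simp add: factor_set_def conjug_def G.m_assoc E.m_assoc)

text \<open>The class of the factor set in \<open>K/C\<close> is a 2-cocycle of \<open>G\<close> with trivial coefficients,
  extended by \<open>\<one>\<close> off \<open>G \<times> G\<close> so that it can be evaluated on arbitrary chains.\<close>

definition factor_class :: "'a \<times> 'a \<Rightarrow> 'b set" where
  "factor_class p =
     (if p \<in> carrier G \<times> carrier G then cls (factor_set (fst p) (snd p)) else \<one>\<^bsub>Q\<^esub>)"

lemma factor_class_closed: "factor_class p \<in> carrier Q"
  by (auto simp: factor_class_def factor_set_in_kernel Q.one_closed)

lemma factor_class_cocycle:
  assumes abc: "a \<in> carrier G" "b \<in> carrier G" "c \<in> carrier G"
  shows "factor_class (b, c) \<otimes>\<^bsub>Q\<^esub> inv\<^bsub>Q\<^esub> factor_class (a \<otimes>\<^bsub>G\<^esub> b, c)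
       \<otimes>\<^bsub>Q\<^esub> factor_class (a, b \<otimes>\<^bsub>G\<^esub> c) \<otimes>\<^bsub>Q\<^esub> inv\<^bsub>Q\<^esub> factor_class (a, b) = \<one>\<^bsub>Q\<^esub>"
proof -
  have k: "factor_set a b \<in> K" "factor_set (a \<otimes>\<^bsub>G\<^esub> b) c \<in> K"
    "factor_set b c \<in> K" "factor_set a (b \<otimes>\<^bsub>G\<^esub> c) \<in> K"
    using abc by (auto intro!: factor_set_in_kernel)
  have "factor_class (a, b) \<otimes>\<^bsub>Q\<^esub> factor_class (a \<otimes>\<^bsub>G\<^esub> b, c)
      = factor_class (b, c) \<otimes>\<^bsub>Q\<^esub> factor_class (a, b \<otimes>\<^bsub>G\<^esub> c)"
    using factor_set_cocycle[OF abc] abc k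
    by (simp add: factor_class_def flip: cls_mult) (simp add: cls_mult cls_conjug kernel_conjug)
  then show ?thesis
    by (intro Q.mult_inv_mult_inv_eq_one factor_class_closed)
qed

lemma chain_eval_bd3:
  assumes e: "e \<in> chains3 G"
  shows "chain_eval Q factor_class (bd3 G e) = \<one>\<^bsub>Q\<^esub>"
proof -
  define F :: "'a \<times> 'a \<times> 'a \<Rightarrow> 'a \<times> 'a \<Rightarrow> int" where
    "F t z = (case t of (a, b, c) \<Rightarrow> of_bool ((b, c) = z) - of_bool ((a \<otimes>\<^bsub>G\<^esub> b, c) = z)
                              + of_bool ((a, b \<otimes>\<^bsub>G\<^esub> c) = z) - of_bool ((a, b) = z))" for t z
  have fin: "finite (supp e)" and sub: "supp e \<subseteq> carrier G \<times> carrier G \<times> carrier G"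
    using e by (auto simp: chains3_def)
  have F_split: "F (a, b, c) = (\<lambda>z. of_bool ((b, c) = z) - of_bool ((a \<otimes>\<^bsub>G\<^esub> b, c) = z)
                              + of_bool ((a, b \<otimes>\<^bsub>G\<^esub> c) = z) - of_bool ((a, b) = z))" for a b c
    by (simp add: F_def fun_eq_iff)
  have fF: "finite (supp (F t))" for t
    by (cases t) (simp add: F_split)
  have "chain_eval Q factor_class (bd3 G e)
      = (\<Otimes>\<^bsub>Q\<^esub>t\<in>supp e. chain_eval Q factor_class (F t) [^]\<^bsub>Q\<^esub> e t)"
    unfolding bd3_def F_def[symmetric]
    by (rule Q.chain_eval_sum_scaled[OF factor_class_closed fin fF])
  also have "\<dots> = \<one>\<^bsub>Q\<^esub>"
  proof (rule Q.finprod_one_eqI)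
    fix t assume "t \<in> supp e"
    then obtain a b c where t: "t = (a, b, c)" and abc: "a \<in> carrier G" "b \<in> carrier G" "c \<in> carrier G"
      using sub by (cases t) auto
    have "chain_eval Q factor_class (F t) = \<one>\<^bsub>Q\<^esub>"
      using factor_class_cocycle[OF abc] factor_class_closed
      by (simp add: t F_split Q.chain_eval_add Q.chain_eval_diff Q.chain_eval_delta')
    then show "chain_eval Q factor_class (F t) [^]\<^bsub>Q\<^esub> e t = \<one>\<^bsub>Q\<^esub>"
      by simp
  qed
  finally show ?thesis .
qed

definition lift_error :: "'b \<Rightarrow> 'b set" where
  "lift_error g = (if g \<in> carrier E then cls (inv\<^bsub>E\<^esub> g \<otimes>\<^bsub>E\<^esub> sect (q g)) else \<one>\<^bsub>Q\<^esub>)"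

lemma lift_error_in_kernel: "g \<in> carrier E \<Longrightarrow> inv\<^bsub>E\<^esub> g \<otimes>\<^bsub>E\<^esub> sect (q g) \<in> K"
  by (simp add: in_kernel_iff)

lemma lift_error_closed: "lift_error g \<in> carrier Q"
  by (auto simp: lift_error_def lift_error_in_kernel Q.one_closed)

lemma factor_class_q:
  assumes ab: "a \<in> carrier E" "b \<in> carrier E"
  shows "factor_class (q a, q b)
       = lift_error b \<otimes>\<^bsub>Q\<^esub> inv\<^bsub>Q\<^esub> lift_error (a \<otimes>\<^bsub>E\<^esub> b) \<otimes>\<^bsub>Q\<^esub> lift_error a"
proof -
  let ?\<alpha> = "\<lambda>g. inv\<^bsub>E\<^esub> g \<otimes>\<^bsub>E\<^esub> sect (q g)"
  have k: "?\<alpha> a \<in> K" "?\<alpha> b \<in> K" "?\<alpha> (a \<otimes>\<^bsub>E\<^esub> b) \<in> K"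
    using ab lift_error_in_kernel E.m_closed by blast+
  have "factor_set (q a) (q b)
      = conjug E a (?\<alpha> a) \<otimes>\<^bsub>E\<^esub> conjug E (a \<otimes>\<^bsub>E\<^esub> b) (?\<alpha> b \<otimes>\<^bsub>E\<^esub> inv\<^bsub>E\<^esub> ?\<alpha> (a \<otimes>\<^bsub>E\<^esub> b))"
    using ab by (simp add: factor_set_def conjug_def E.m_assoc E.inv_mult_group)
  then have "factor_class (q a, q b) = cls (?\<alpha> a) \<otimes>\<^bsub>Q\<^esub> (cls (?\<alpha> b) \<otimes>\<^bsub>Q\<^esub> inv\<^bsub>Q\<^esub> cls (?\<alpha> (a \<otimes>\<^bsub>E\<^esub> b)))"
    using ab k by (simp add: factor_class_def cls_mult cls_inv cls_conjug kernel_conjug kernel_mult kernel_inv)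
  then show ?thesis
    using ab k by (simp add: lift_error_def Q.m_ac cls_closed)
qed

lemma chain_eval_push2:
  assumes c: "c \<in> cycles2 E"
  shows "chain_eval Q factor_class (push2 q c) = \<one>\<^bsub>Q\<^esub>"
proof -
  define B :: "'b \<times> 'b \<Rightarrow> 'b \<Rightarrow> int" where
    "B p z = of_bool (snd p = z) - of_bool (fst p \<otimes>\<^bsub>E\<^esub> snd p = z) + of_bool (fst p = z)" for p z
  have fin: "finite (supp c)" and sub: "supp c \<subseteq> carrier E \<times> carrier E"
    and cyc: "bd2 E c = (\<lambda>_. 0)"
    using c by (auto simp: cycles2_def chains2_def)
  have "push2 q c = (\<lambda>z. \<Sum>p\<in>supp c. c p * of_bool ((q (fst p), q (snd p)) = z))"
    using push2_eq_sum[OF fin] by blast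
  then have "chain_eval Q factor_class (push2 q c)
      = (\<Otimes>\<^bsub>Q\<^esub>p\<in>supp c. chain_eval Q factor_class (\<lambda>z. of_bool ((q (fst p), q (snd p)) = z))
           [^]\<^bsub>Q\<^esub> c p)"
    by (simp only:) (rule Q.chain_eval_sum_scaled[OF factor_class_closed fin], simp)
  also have "\<dots> = (\<Otimes>\<^bsub>Q\<^esub>p\<in>supp c. chain_eval Q lift_error (B p) [^]\<^bsub>Q\<^esub> c p)"
  proof (rule Q.finprod_cong')
    fix p assume "p \<in> supp c"
    then have "fst p \<in> carrier E" "snd p \<in> carrier E" using sub by auto
    then show "chain_eval Q factor_class (\<lambda>z. of_bool ((q (fst p), q (snd p)) = z)) [^]\<^bsub>Q\<^esub> c p
        = chain_eval Q lift_error (B p) [^]\<^bsub>Q\<^esub> c p"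
      using factor_class_closed lift_error_closed
      by (simp add: B_def[abs_def] factor_class_q Q.chain_eval_add Q.chain_eval_diff Q.chain_eval_delta')
  qed (use lift_error_closed Q.chain_eval_closed in auto)
  also have "\<dots> = chain_eval Q lift_error (bd2 E c)"
    unfolding bd2_def B_def[symmetric]
    by (rule Q.chain_eval_sum_scaled[OF lift_error_closed fin, symmetric]) (simp add: B_def[abs_def])
  also have "\<dots> = \<one>\<^bsub>Q\<^esub>"
    using cyc by (simp add: Q.chain_eval_zero lift_error_closed)
  finally show ?thesis .
qed

lemma chain_eval_in_image_H2:
  assumes z: "in_image_H2 E G q z" and fin: "finite (supp z)"
  shows "chain_eval Q factor_class z = \<one>\<^bsub>Q\<^esub>"
proof -
  obtain c e where c: "c \<in> cycles2 E" and e: "e \<in> chains3 G"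
    and bd: "(\<lambda>p. z p - push2 q c p) = bd3 G e"
    using z by (auto simp: in_image_H2_def)
  have fin_push: "finite (supp (push2 q c))"
    using c by (intro finite_supp_push2) (simp add: cycles2_def chains2_def)
  have "chain_eval Q factor_class (\<lambda>p. (z p - push2 q c p) + push2 q c p)
      = chain_eval Q factor_class (\<lambda>p. z p - push2 q c p) \<otimes>\<^bsub>Q\<^esub> chain_eval Q factor_class (push2 q c)"
    using fin fin_push by (intro Q.chain_eval_add factor_class_closed) simp_all
  then have "chain_eval Q factor_class z
      = chain_eval Q factor_class (bd3 G e) \<otimes>\<^bsub>Q\<^esub> chain_eval Q factor_class (push2 q c)"
    unfolding bd by simp
  also have "\<dots> = \<one>\<^bsub>Q\<^esub>"
    by (simp add: chain_eval_bd3[OF e] chain_eval_push2[OF c])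
  finally show ?thesis .
qed

lemma factor_set_surf_block:
  assumes c: "P \<in> carrier G" "a \<in> carrier G" "b \<in> carrier G"
  shows "factor_set P a \<otimes>\<^bsub>E\<^esub> factor_set (P \<otimes>\<^bsub>G\<^esub> a) b
     \<otimes>\<^bsub>E\<^esub> inv\<^bsub>E\<^esub> factor_set (P \<otimes>\<^bsub>G\<^esub> a \<otimes>\<^bsub>G\<^esub> b \<otimes>\<^bsub>G\<^esub> inv\<^bsub>G\<^esub> a) a
     \<otimes>\<^bsub>E\<^esub> inv\<^bsub>E\<^esub> factor_set (P \<otimes>\<^bsub>G\<^esub> grp_comm G a b) b
   = sect P \<otimes>\<^bsub>E\<^esub> grp_comm E (sect a) (sect b) \<otimes>\<^bsub>E\<^esub> inv\<^bsub>E\<^esub> sect (P \<otimes>\<^bsub>G\<^esub> grp_comm G a b)"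
proof -
  have "P \<otimes>\<^bsub>G\<^esub> a \<otimes>\<^bsub>G\<^esub> b \<otimes>\<^bsub>G\<^esub> inv\<^bsub>G\<^esub> a \<otimes>\<^bsub>G\<^esub> a = P \<otimes>\<^bsub>G\<^esub> a \<otimes>\<^bsub>G\<^esub> b"
    "P \<otimes>\<^bsub>G\<^esub> grp_comm G a b \<otimes>\<^bsub>G\<^esub> b = P \<otimes>\<^bsub>G\<^esub> a \<otimes>\<^bsub>G\<^esub> b \<otimes>\<^bsub>G\<^esub> inv\<^bsub>G\<^esub> a"
    using c by (simp_all add: G.m_assoc grp_comm_def)
  then show ?thesis
    using c by (simp add: factor_set_def grp_comm_def E.m_assoc E.inv_mult_group)
qed

end

section \<open>Lifting surface group homomorphisms\<close>

locale surface_lifting = abelian_extension E G q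
  for E :: "('b, 'n) monoid_scheme" and G :: "('a, 'm) monoid_scheme" and q +
  fixes h :: nat and x y :: "nat \<Rightarrow> 'a"
  assumes surf_epi: "surf_epi G h x y"
begin

interpretation Q: comm_group Q
  by (rule comm_group_Q)

lemma x_closed: "i < h \<Longrightarrow> x i \<in> carrier G"
  and y_closed: "i < h \<Longrightarrow> y i \<in> carrier G"
  and surf_rel_eq_one: "surf_rel G x y h = \<one>\<^bsub>G\<^esub>"
  and generate_xy: "generate G (x ` {..<h} \<union> y ` {..<h}) = carrier G"
  using surf_epi by (auto simp: surf_epi_def surf_hom_def)

lemma surf_rel_closed: "n \<le> h \<Longrightarrow> surf_rel G x y n \<in> carrier G"
  by (rule G.surf_rel_closed) (simp add: x_closed y_closed)

definition base_rel :: "nat \<Rightarrow> 'b" where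
  "base_rel n = surf_rel E (\<lambda>i. sect (x i)) (\<lambda>i. sect (y i)) n"

lemma base_rel_closed: "n \<le> h \<Longrightarrow> base_rel n \<in> carrier E"
  unfolding base_rel_def by (rule E.surf_rel_closed) (simp add: x_closed y_closed)

lemma q_base_rel: "n \<le> h \<Longrightarrow> q (base_rel n) = surf_rel G x y n"
  unfolding base_rel_def
  by (subst q.hom_surf_rel) (auto simp: x_closed y_closed intro: surf_rel_cong)

lemma base_rel_in_kernel: "base_rel h \<in> K"
  by (simp add: in_kernel_iff base_rel_closed q_base_rel surf_rel_eq_one)

text \<open>A twist \<open>\<gamma>\<close> records the kernel elements by which a lift of \<open>(x, y)\<close> differs from the
  fixed one \<open>(sect \<circ> x, sect \<circ> y)\<close>: \<open>\<gamma> i\<close> for the \<open>i\<close>-th \<open>x\<close>, \<open>\<gamma> (h + i)\<close> for the \<open>i\<close>-th \<open>y\<close>.\<close>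

abbreviation twists :: "(nat \<Rightarrow> 'b) monoid" where
  "twists \<equiv> product_group {..<2 * h} (\<lambda>_. KE)"

lemma group_twists: "group twists"
  by (simp add: group_KE)

lemma twists_mult_closed:
  "\<gamma> \<in> carrier twists \<Longrightarrow> \<delta> \<in> carrier twists \<Longrightarrow> \<gamma> \<otimes>\<^bsub>twists\<^esub> \<delta> \<in> carrier twists"
  by (rule monoid.m_closed[OF group.is_monoid[OF group_twists]])

lemma twist_in_kernel:
  "\<gamma> \<in> carrier twists \<Longrightarrow> i < h \<Longrightarrow> \<gamma> i \<in> K \<and> \<gamma> (h + i) \<in> K"
  by (auto simp: PiE_iff)

lemma twist_mult:
  "\<gamma> \<in> carrier twists \<Longrightarrow> \<delta> \<in> carrier twists \<Longrightarrow> i < h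
   \<Longrightarrow> (\<gamma> \<otimes>\<^bsub>twists\<^esub> \<delta>) i = \<gamma> i \<otimes>\<^bsub>E\<^esub> \<delta> i
     \<and> (\<gamma> \<otimes>\<^bsub>twists\<^esub> \<delta>) (h + i) = \<gamma> (h + i) \<otimes>\<^bsub>E\<^esub> \<delta> (h + i)"
  by simp

definition twist_x :: "(nat \<Rightarrow> 'b) \<Rightarrow> nat \<Rightarrow> 'b" where
  "twist_x \<gamma> i = sect (x i) \<otimes>\<^bsub>E\<^esub> \<gamma> i"

definition twist_y :: "(nat \<Rightarrow> 'b) \<Rightarrow> nat \<Rightarrow> 'b" where
  "twist_y \<gamma> i = sect (y i) \<otimes>\<^bsub>E\<^esub> \<gamma> (h + i)"

lemma twist_xy_closed:
  "\<gamma> \<in> carrier twists \<Longrightarrow> i < h \<Longrightarrow> twist_x \<gamma> i \<in> carrier E \<and> twist_y \<gamma> i \<in> carrier E"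
proof -
  assume "\<gamma> \<in> carrier twists" "i < h"
  then have "\<gamma> i \<in> carrier E" "\<gamma> (h + i) \<in> carrier E"
    using twist_in_kernel by auto
  with \<open>i < h\<close> show ?thesis by (simp add: twist_x_def twist_y_def x_closed y_closed)
qed

lemma q_twist_xy:
  "\<gamma> \<in> carrier twists \<Longrightarrow> i < h \<Longrightarrow> q (twist_x \<gamma> i) = x i \<and> q (twist_y \<gamma> i) = y i"
  using twist_in_kernel by (auto simp: twist_x_def twist_y_def x_closed y_closed in_kernel_iff)

definition defect :: "nat \<Rightarrow> (nat \<Rightarrow> 'b) \<Rightarrow> 'b" where
  "defect n \<gamma> = surf_rel E (twist_x \<gamma>) (twist_y \<gamma>) n \<otimes>\<^bsub>E\<^esub> inv\<^bsub>E\<^esub> base_rel n"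

lemma twisted_rel_closed:
  "\<gamma> \<in> carrier twists \<Longrightarrow> n \<le> h \<Longrightarrow> surf_rel E (twist_x \<gamma>) (twist_y \<gamma>) n \<in> carrier E"
  by (rule E.surf_rel_closed) (simp add: twist_xy_closed)

lemma q_twisted_rel:
  assumes \<gamma>: "\<gamma> \<in> carrier twists" and n: "n \<le> h"
  shows "q (surf_rel E (twist_x \<gamma>) (twist_y \<gamma>) n) = surf_rel G x y n"
proof -
  have "q (surf_rel E (twist_x \<gamma>) (twist_y \<gamma>) n)
      = surf_rel G (\<lambda>i. q (twist_x \<gamma> i)) (\<lambda>i. q (twist_y \<gamma> i)) n"
    by (rule q.hom_surf_rel) (use \<gamma> n twist_xy_closed in auto)
  also have "\<dots> = surf_rel G x y n"
    by (rule surf_rel_cong) (use \<gamma> n q_twist_xy in auto)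
  finally show ?thesis .
qed

lemma defect_in_kernel:
  assumes \<gamma>: "\<gamma> \<in> carrier twists" and n: "n \<le> h"
  shows "defect n \<gamma> \<in> K"
proof -
  have c: "surf_rel E (twist_x \<gamma>) (twist_y \<gamma>) n \<in> carrier E" "base_rel n \<in> carrier E"
    using twisted_rel_closed[OF \<gamma> n] base_rel_closed[OF n] .
  then have "q (defect n \<gamma>) = surf_rel G x y n \<otimes>\<^bsub>G\<^esub> inv\<^bsub>G\<^esub> surf_rel G x y n"
    unfolding defect_def by (simp add: q_twisted_rel[OF \<gamma> n] q_base_rel[OF n])
  then show ?thesis
    using c surf_rel_closed[OF n] by (simp add: in_kernel_iff defect_def)
qed

definition pre_x :: "nat \<Rightarrow> 'b" where
  "pre_x n = base_rel n \<otimes>\<^bsub>E\<^esub> sect (x n)"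

definition pre_xy :: "nat \<Rightarrow> 'b" where
  "pre_xy n = pre_x n \<otimes>\<^bsub>E\<^esub> sect (y n)"

definition pre_xyx :: "nat \<Rightarrow> 'b" where
  "pre_xyx n = pre_xy n \<otimes>\<^bsub>E\<^esub> inv\<^bsub>E\<^esub> sect (x n)"

lemma pre_closed: "n < h \<Longrightarrow> pre_x n \<in> carrier E \<and> pre_xy n \<in> carrier E \<and> pre_xyx n \<in> carrier E"
  by (simp add: pre_x_def pre_xy_def pre_xyx_def base_rel_closed x_closed y_closed)

text \<open>By \<open>defect_Suc\<close> this is the contribution of the \<open>n\<close>-th commutator; the formula is
  \<open>grp_comm_twist\<close> conjugated by \<open>base_rel n\<close>.\<close>

definition defect_step :: "nat \<Rightarrow> (nat \<Rightarrow> 'b) \<Rightarrow> 'b" where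
  "defect_step n \<gamma> = conjug E (pre_x n) (\<gamma> n) \<otimes>\<^bsub>E\<^esub> conjug E (pre_xy n) (\<gamma> (h + n))
     \<otimes>\<^bsub>E\<^esub> inv\<^bsub>E\<^esub> conjug E (pre_xy n) (\<gamma> n) \<otimes>\<^bsub>E\<^esub> inv\<^bsub>E\<^esub> conjug E (pre_xyx n) (\<gamma> (h + n))"

lemma base_rel_Suc:
  "base_rel (Suc n) = base_rel n \<otimes>\<^bsub>E\<^esub> grp_comm E (sect (x n)) (sect (y n))"
  by (simp add: base_rel_def)

lemma defect_0: "defect 0 \<gamma> = \<one>\<^bsub>E\<^esub>"
  by (simp add: defect_def base_rel_def)

lemma defect_Suc:
  assumes \<gamma>: "\<gamma> \<in> carrier twists" and n: "n < h"
  shows "defect (Suc n) \<gamma> = defect n \<gamma> \<otimes>\<^bsub>E\<^esub> defect_step n \<gamma>"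
proof -
  let ?a = "sect (x n)" and ?b = "sect (y n)" and ?u = "\<gamma> n" and ?v = "\<gamma> (h + n)"
  have c: "?a \<in> carrier E" "?b \<in> carrier E" "?u \<in> carrier E" "?v \<in> carrier E"
    using \<gamma> n twist_in_kernel by (auto simp: x_closed y_closed)
  let ?t = "grp_comm E (?a \<otimes>\<^bsub>E\<^esub> ?u) (?b \<otimes>\<^bsub>E\<^esub> ?v) \<otimes>\<^bsub>E\<^esub> inv\<^bsub>E\<^esub> grp_comm E ?a ?b"
  have "defect (Suc n) \<gamma> = defect n \<gamma> \<otimes>\<^bsub>E\<^esub> conjug E (base_rel n) ?t"
    unfolding defect_def using \<gamma> n c
    by (simp add: base_rel_Suc twist_x_def twist_y_def E.mult_inv_mult_conjug
        twisted_rel_closed base_rel_closed)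
  also have "conjug E (base_rel n) ?t = defect_step n \<gamma>"
    using c n base_rel_closed[of n]
    by (simp add: E.grp_comm_twist E.conjug_mult E.conjug_inv E.conjug_conjug
        defect_step_def pre_x_def pre_xy_def pre_xyx_def E.m_assoc)
  finally show ?thesis .
qed

lemma defect_step_in_kernel:
  assumes "\<gamma> \<in> carrier twists" and n: "n < h"
  shows "defect_step n \<gamma> \<in> K"
proof -
  have "pre_x n \<in> carrier E" "pre_xy n \<in> carrier E" "pre_xyx n \<in> carrier E"
    "\<gamma> n \<in> K" "\<gamma> (h + n) \<in> K"
    using pre_closed[OF n] twist_in_kernel[OF assms] by auto
  then show ?thesis
    unfolding defect_step_def by (intro kernel_mult kernel_inv kernel_conjug)
qed

lemma defect_step_mult:
  assumes \<gamma>: "\<gamma> \<in> carrier twists" and \<delta>: "\<delta> \<in> carrier twists" and n: "n < h"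
  shows "defect_step n (\<gamma> \<otimes>\<^bsub>twists\<^esub> \<delta>) = defect_step n \<gamma> \<otimes>\<^bsub>E\<^esub> defect_step n \<delta>"
proof -
  have p: "pre_x n \<in> carrier E" "pre_xy n \<in> carrier E" "pre_xyx n \<in> carrier E"
    using pre_closed[OF n] by auto
  have k: "\<gamma> n \<in> K" "\<gamma> (h + n) \<in> K" "\<delta> n \<in> K" "\<delta> (h + n) \<in> K"
    using twist_in_kernel[OF \<gamma> n] twist_in_kernel[OF \<delta> n] by auto
  show ?thesis
    unfolding defect_step_def twist_mult[OF \<gamma> \<delta> n, THEN conjunct1] twist_mult[OF \<gamma> \<delta> n, THEN conjunct2]
    using p k by (simp only: E.conjug_mult kernel_closed) (rule kernel_interchange; blast)
qed

lemma defect_mult: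
  assumes \<gamma>: "\<gamma> \<in> carrier twists" and \<delta>: "\<delta> \<in> carrier twists"
  shows "n \<le> h \<Longrightarrow> defect n (\<gamma> \<otimes>\<^bsub>twists\<^esub> \<delta>) = defect n \<gamma> \<otimes>\<^bsub>E\<^esub> defect n \<delta>"
proof (induction n)
  case 0
  then show ?case by (simp add: defect_0)
next
  case (Suc n)
  then have n: "n < h" by simp
  have \<gamma>\<delta>: "\<gamma> \<otimes>\<^bsub>twists\<^esub> \<delta> \<in> carrier twists"
    using twists_mult_closed[OF \<gamma> \<delta>] .
  have k: "defect n \<gamma> \<in> K" "defect n \<delta> \<in> K" "defect_step n \<gamma> \<in> K" "defect_step n \<delta> \<in> K"
    using defect_in_kernel defect_step_in_kernel \<gamma> \<delta> n by auto
  have "defect (Suc n) (\<gamma> \<otimes>\<^bsub>twists\<^esub> \<delta>)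
      = (defect n \<gamma> \<otimes>\<^bsub>E\<^esub> defect n \<delta>) \<otimes>\<^bsub>E\<^esub> (defect_step n \<gamma> \<otimes>\<^bsub>E\<^esub> defect_step n \<delta>)"
    using Suc.IH n by (simp only: defect_Suc[OF \<gamma>\<delta> n] defect_step_mult[OF \<gamma> \<delta> n] less_imp_le)
  also have "\<dots> = (defect n \<gamma> \<otimes>\<^bsub>E\<^esub> defect_step n \<gamma>) \<otimes>\<^bsub>E\<^esub> (defect n \<delta> \<otimes>\<^bsub>E\<^esub> defect_step n \<delta>)"
    using k by (simp add: E.m_assoc kernel_closed kernel_lcommute[of "defect n \<delta>"])
  finally show ?case
    by (simp only: defect_Suc[OF \<gamma> n] defect_Suc[OF \<delta> n])
qed

lemma defect_group_hom: "group_hom twists KE (defect h)"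
proof -
  have "defect h \<in> hom twists KE"
    by (rule homI) (simp_all add: defect_in_kernel defect_mult del: mult_product_group)
  then show ?thesis
    using group_twists group_KE by (simp add: group_hom_def group_hom_axioms_def)
qed

lemma defect_step_in_C:
  assumes \<gamma>: "\<gamma> \<in> carrier twists" and n: "n < h"
  shows "defect_step n \<gamma> \<in> C"
proof -
  have k: "\<gamma> n \<in> K" "\<gamma> (h + n) \<in> K"
    using twist_in_kernel[OF \<gamma> n] by auto
  have "cls (defect_step n \<gamma>) = grp_comm Q (cls (\<gamma> n)) (cls (\<gamma> (h + n)))"
    using k pre_closed[OF n]
    by (simp add: defect_step_def grp_comm_def cls_mult cls_inv cls_conjug kernel_mult kernel_inv
        kernel_conjug)
  also have "\<dots> = \<one>\<^bsub>Q\<^esub>"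
    using k by (simp add: Q.grp_comm_eq_one cls_closed)
  finally show ?thesis
    using cls_eq_one_iff defect_step_in_kernel[OF \<gamma> n] by blast
qed

lemma defect_in_C:
  assumes \<gamma>: "\<gamma> \<in> carrier twists"
  shows "n \<le> h \<Longrightarrow> defect n \<gamma> \<in> C"
proof (induction n)
  case 0
  then show ?case by (simp add: defect_0 subgroup.one_closed[OF C_subgroup])
next
  case (Suc n)
  then have n: "n < h" by simp
  then show ?case
    unfolding defect_Suc[OF \<gamma> n]
    using Suc.IH defect_step_in_C[OF \<gamma> n] by (simp add: subgroup.m_closed[OF C_subgroup])
qed

definition basis_twist :: "nat \<Rightarrow> 'b \<Rightarrow> 'b \<Rightarrow> nat \<Rightarrow> 'b" where
  "basis_twist i u v = (\<lambda>j\<in>{..<2 * h}. if j = i then u else if j = h + i then v else \<one>\<^bsub>E\<^esub>)"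

lemma basis_twist_closed: "i < h \<Longrightarrow> u \<in> K \<Longrightarrow> v \<in> K \<Longrightarrow> basis_twist i u v \<in> carrier twists"
  by (auto simp: basis_twist_def)

lemma defect_basis_twist:
  assumes i: "i < h" and uv: "u \<in> K" "v \<in> K"
  shows "defect h (basis_twist i u v) = conjug E (pre_x i) u \<otimes>\<^bsub>E\<^esub> conjug E (pre_xy i) v
     \<otimes>\<^bsub>E\<^esub> inv\<^bsub>E\<^esub> conjug E (pre_xy i) u \<otimes>\<^bsub>E\<^esub> inv\<^bsub>E\<^esub> conjug E (pre_xyx i) v"
proof -
  let ?\<beta> = "basis_twist i u v"
  have \<beta>: "?\<beta> \<in> carrier twists" by (rule basis_twist_closed[OF i uv])
  have other: "defect_step j ?\<beta> = \<one>\<^bsub>E\<^esub>" if "j < h" "j \<noteq> i" for j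
    using that i pre_closed[OF that(1)] by (simp add: defect_step_def basis_twist_def)
  have "n \<le> h \<Longrightarrow> defect n ?\<beta> = (if n \<le> i then \<one>\<^bsub>E\<^esub> else defect_step i ?\<beta>)" for n
  proof (induction n)
    case 0
    then show ?case by (simp add: defect_0)
  next
    case (Suc n)
    then have n: "n < h" by simp
    show ?case
      using Suc.IH n other[of n] defect_step_in_kernel[OF \<beta> i] defect_Suc[OF \<beta> n]
      by (cases "n = i") (auto simp: kernel_closed)
  qed
  then have "defect h ?\<beta> = defect_step i ?\<beta>"
    using i by simp
  then show ?thesis
    using i by (simp add: defect_step_def basis_twist_def)
qed

lemma defect_image_subgroup: "subgroup (defect h ` carrier twists) E"
  using E.incl_subgroup[OF kernel_subgroup group_hom.img_is_subgroup[OF defect_group_hom]] .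

definition comm_image_set :: "'b set" where
  "comm_image_set = {g \<in> carrier E. \<forall>k\<in>K. grp_comm E k g \<in> defect h ` carrier twists}"

lemma comm_image_set_subgroup: "subgroup comm_image_set E"
proof (rule E.subgroupI)
  show "comm_image_set \<subseteq> carrier E" by (auto simp: comm_image_set_def)
  have "grp_comm E k \<one>\<^bsub>E\<^esub> = \<one>\<^bsub>E\<^esub>" if "k \<in> K" for k
    using that by (simp add: grp_comm_def kernel_closed)
  then have "\<one>\<^bsub>E\<^esub> \<in> comm_image_set"
    using subgroup.one_closed[OF defect_image_subgroup] by (simp add: comm_image_set_def)
  then show "comm_image_set \<noteq> {}" by blast
next
  fix g assume g: "g \<in> comm_image_set"
  then have gc: "g \<in> carrier E" by (simp add: comm_image_set_def)
  have "grp_comm E k (inv\<^bsub>E\<^esub> g) \<in> defect h ` carrier twists" if k: "k \<in> K" for k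
  proof -
    have "grp_comm E (conjug E (inv\<^bsub>E\<^esub> g) k) g \<in> defect h ` carrier twists"
      using g gc k by (auto simp: comm_image_set_def)
    then show ?thesis
      using subgroup.m_inv_closed[OF defect_image_subgroup] gc k
      by (simp add: E.grp_comm_inv_right kernel_closed)
  qed
  then show "inv\<^bsub>E\<^esub> g \<in> comm_image_set"
    using gc by (simp add: comm_image_set_def)
next
  fix g g' assume g: "g \<in> comm_image_set" and g': "g' \<in> comm_image_set"
  then have gc: "g \<in> carrier E" "g' \<in> carrier E" by (auto simp: comm_image_set_def)
  have "grp_comm E k (g \<otimes>\<^bsub>E\<^esub> g') \<in> defect h ` carrier twists" if k: "k \<in> K" for k
  proof -
    have "grp_comm E k g' \<in> defect h ` carrier twists"
      "grp_comm E (conjug E g' k) g \<in> defect h ` carrier twists"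
      using g g' gc k by (auto simp: comm_image_set_def)
    then show ?thesis
      using subgroup.m_closed[OF defect_image_subgroup] gc k
      by (simp add: E.grp_comm_mult_right kernel_closed)
  qed
  then show "g \<otimes>\<^bsub>E\<^esub> g' \<in> comm_image_set"
    using gc by (simp add: comm_image_set_def)
qed

lemma kernel_subset_comm_image_set: "K \<subseteq> comm_image_set"
proof
  fix k' assume k': "k' \<in> K"
  have "grp_comm E k k' = \<one>\<^bsub>E\<^esub>" if k: "k \<in> K" for k
    using kernel_commute[OF k k'] k k' by (simp add: grp_comm_def E.m_assoc kernel_closed)
  then show "k' \<in> comm_image_set"
    using k' subgroup.one_closed[OF defect_image_subgroup]
    by (auto simp: comm_image_set_def)
qed

lemma conjug_pre_in_comm_image_set:
  assumes i: "i < h"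
  shows "conjug E (pre_x i) (sect (y i)) \<in> comm_image_set"
    and "conjug E (pre_xy i) (inv\<^bsub>E\<^esub> sect (x i)) \<in> comm_image_set"
proof -
  have p: "pre_x i \<in> carrier E" "pre_xy i \<in> carrier E" "pre_xyx i \<in> carrier E"
    using pre_closed[OF i] by auto
  have s: "sect (x i) \<in> carrier E" "sect (y i) \<in> carrier E"
    using i by (auto simp: x_closed y_closed)
  have quotient: "conjug E a (conjug E (inv\<^bsub>E\<^esub> a) k) \<otimes>\<^bsub>E\<^esub> inv\<^bsub>E\<^esub> conjug E b (conjug E (inv\<^bsub>E\<^esub> a) k)
      = grp_comm E k (b \<otimes>\<^bsub>E\<^esub> inv\<^bsub>E\<^esub> a)"
    if "a \<in> carrier E" "b \<in> carrier E" "k \<in> carrier E" for a b k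
    using that by (simp add: conjug_def grp_comm_def E.m_assoc E.inv_mult_group)
  show "conjug E (pre_x i) (sect (y i)) \<in> comm_image_set"
    unfolding comm_image_set_def
  proof (intro CollectI conjI ballI)
    fix k assume k: "k \<in> K"
    let ?u = "conjug E (inv\<^bsub>E\<^esub> pre_x i) k"
    have u: "?u \<in> K" using k p by blast
    have "defect h (basis_twist i ?u \<one>\<^bsub>E\<^esub>) = grp_comm E k (pre_xy i \<otimes>\<^bsub>E\<^esub> inv\<^bsub>E\<^esub> pre_x i)"
      using p k by (simp add: defect_basis_twist[OF i u] quotient kernel_closed)
    also have "pre_xy i \<otimes>\<^bsub>E\<^esub> inv\<^bsub>E\<^esub> pre_x i = conjug E (pre_x i) (sect (y i))"
      by (simp add: pre_xy_def conjug_def)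
    finally show "grp_comm E k (conjug E (pre_x i) (sect (y i))) \<in> defect h ` carrier twists"
      using basis_twist_closed[OF i u kernel_one] by (metis image_eqI)
  qed (use p s in auto)
  show "conjug E (pre_xy i) (inv\<^bsub>E\<^esub> sect (x i)) \<in> comm_image_set"
    unfolding comm_image_set_def
  proof (intro CollectI conjI ballI)
    fix k assume k: "k \<in> K"
    let ?v = "conjug E (inv\<^bsub>E\<^esub> pre_xy i) k"
    have v: "?v \<in> K" using k p by blast
    have "defect h (basis_twist i \<one>\<^bsub>E\<^esub> ?v) = grp_comm E k (pre_xyx i \<otimes>\<^bsub>E\<^esub> inv\<^bsub>E\<^esub> pre_xy i)"
      using p k by (simp add: defect_basis_twist[OF i kernel_one v] quotient kernel_closed)
    also have "pre_xyx i \<otimes>\<^bsub>E\<^esub> inv\<^bsub>E\<^esub> pre_xy i = conjug E (pre_xy i) (inv\<^bsub>E\<^esub> sect (x i))"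
      by (simp add: pre_xyx_def conjug_def)
    finally show "grp_comm E k (conjug E (pre_xy i) (inv\<^bsub>E\<^esub> sect (x i))) \<in> defect h ` carrier twists"
      using basis_twist_closed[OF i kernel_one v] by (metis image_eqI)
  qed (use p s in auto)
qed

lemma q_pre:
  "i < h \<Longrightarrow> q (pre_x i) = surf_rel G x y i \<otimes>\<^bsub>G\<^esub> x i
    \<and> q (pre_xy i) = surf_rel G x y i \<otimes>\<^bsub>G\<^esub> x i \<otimes>\<^bsub>G\<^esub> y i"
  by (simp add: pre_x_def pre_xy_def q_base_rel base_rel_closed x_closed y_closed)

lemma xy_in_image_comm_image_set:
  "n \<le> h \<Longrightarrow> \<forall>i<n. x i \<in> q ` comm_image_set \<and> y i \<in> q ` comm_image_set"
proof (induction n)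
  case 0
  then show ?case by simp
next
  case (Suc n)
  let ?H = "q ` comm_image_set"
  have H: "subgroup ?H G"
    by (rule q.subgroup_img_is_subgroup[OF comm_image_set_subgroup])
  have n: "n < h" using Suc.prems by simp
  have "surf_rel G x y n \<in> ?H"
    using Suc by (intro G.surf_rel_in_subgroup[OF H]) auto
  moreover have "q (conjug E (pre_x n) (sect (y n))) = conjug G (surf_rel G x y n \<otimes>\<^bsub>G\<^esub> x n) (y n)"
    "q (conjug E (pre_xy n) (inv\<^bsub>E\<^esub> sect (x n)))
      = conjug G (surf_rel G x y n \<otimes>\<^bsub>G\<^esub> x n \<otimes>\<^bsub>G\<^esub> y n) (inv\<^bsub>G\<^esub> x n)"
    using q_pre[OF n] pre_closed[OF n] n by (simp_all add: conjug_def x_closed y_closed)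
  then have "conjug G (surf_rel G x y n \<otimes>\<^bsub>G\<^esub> x n) (y n) \<in> ?H"
    "conjug G (surf_rel G x y n \<otimes>\<^bsub>G\<^esub> x n \<otimes>\<^bsub>G\<^esub> y n) (inv\<^bsub>G\<^esub> x n) \<in> ?H"
    using conjug_pre_in_comm_image_set[OF n] by (metis image_eqI)+
  ultimately have "x n \<in> ?H \<and> y n \<in> ?H"
    using n surf_rel_closed[of n]
    by (intro G.in_subgroup_from_conjugates[OF H]) (auto simp: x_closed y_closed)
  then show ?case
    using Suc by (auto simp: less_Suc_eq)
qed

lemma comm_image_set_eq_carrier: "comm_image_set = carrier E"
proof
  show "comm_image_set \<subseteq> carrier E" by (auto simp: comm_image_set_def)
  have "generate G (x ` {..<h} \<union> y ` {..<h}) \<subseteq> q ` comm_image_set"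
    using xy_in_image_comm_image_set[of h]
    by (intro G.generate_subgroup_incl q.subgroup_img_is_subgroup comm_image_set_subgroup) auto
  then have onto: "carrier G \<subseteq> q ` comm_image_set"
    by (simp add: generate_xy)
  show "carrier E \<subseteq> comm_image_set"
  proof
    fix g assume g: "g \<in> carrier E"
    then obtain t where t: "t \<in> comm_image_set" "q t = q g"
      using onto by (metis imageE q.hom_closed subsetD)
    then have tc: "t \<in> carrier E" by (simp add: comm_image_set_def)
    have "g \<otimes>\<^bsub>E\<^esub> inv\<^bsub>E\<^esub> t \<in> comm_image_set"
      using g tc t kernel_subset_comm_image_set by (auto simp: in_kernel_iff)
    then have "(g \<otimes>\<^bsub>E\<^esub> inv\<^bsub>E\<^esub> t) \<otimes>\<^bsub>E\<^esub> t \<in> comm_image_set"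
      using t subgroup.m_closed[OF comm_image_set_subgroup] by blast
    then show "g \<in> comm_image_set"
      using g tc by (simp add: E.m_assoc)
  qed
qed

lemma defect_image_eq_C: "defect h ` carrier twists = C"
proof
  show "defect h ` carrier twists \<subseteq> C"
    using defect_in_C by auto
  have "{grp_comm E k g |k g. k \<in> K \<and> g \<in> carrier E} \<subseteq> defect h ` carrier twists"
    using comm_image_set_eq_carrier by (auto simp: comm_image_set_def)
  then show "C \<subseteq> defect h ` carrier twists"
    unfolding comm_subgroup_def by (rule E.generate_subgroup_incl[OF _ defect_image_subgroup])
qed

definition twisted :: "(nat \<Rightarrow> 'b) \<Rightarrow> (nat \<Rightarrow> 'b) \<times> (nat \<Rightarrow> 'b)" where
  "twisted \<gamma> = (\<lambda>i\<in>{..<h}. twist_x \<gamma> i, \<lambda>i\<in>{..<h}. twist_y \<gamma> i)"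

lemma twisted_in_lifts_iff:
  assumes \<gamma>: "\<gamma> \<in> carrier twists"
  shows "twisted \<gamma> \<in> lifts E q h x y \<longleftrightarrow> defect h \<gamma> = inv\<^bsub>E\<^esub> base_rel h"
proof -
  have "surf_rel E (\<lambda>i\<in>{..<h}. twist_x \<gamma> i) (\<lambda>i\<in>{..<h}. twist_y \<gamma> i) h
      = surf_rel E (twist_x \<gamma>) (twist_y \<gamma>) h"
    by (rule surf_rel_cong) simp
  then have "twisted \<gamma> \<in> lifts E q h x y \<longleftrightarrow> surf_rel E (twist_x \<gamma>) (twist_y \<gamma>) h = \<one>\<^bsub>E\<^esub>"
    using twist_xy_closed[OF \<gamma>] q_twist_xy[OF \<gamma>]
    by (auto simp: twisted_def lifts_def surf_hom_def)
  also have "\<dots> \<longleftrightarrow> defect h \<gamma> = inv\<^bsub>E\<^esub> base_rel h"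
    using twisted_rel_closed[OF \<gamma>] base_rel_closed[of h] by (simp add: defect_def)
  finally show ?thesis .
qed

lemma lifts_subset_twisted: "lifts E q h x y \<subseteq> twisted ` carrier twists"
proof
  fix p assume p: "p \<in> lifts E q h x y"
  obtain x' y' where p_eq: "p = (x', y')" by (cases p)
  have x': "x' \<in> {..<h} \<rightarrow>\<^sub>E carrier E" and y': "y' \<in> {..<h} \<rightarrow>\<^sub>E carrier E"
    and q': "\<forall>i<h. q (x' i) = x i \<and> q (y' i) = y i"
    using p p_eq by (auto simp: lifts_def surf_hom_def)
  have x'_i: "x' i \<in> carrier E" "q (x' i) = x i" and y'_i: "y' i \<in> carrier E" "q (y' i) = y i"
    if "i < h" for i
    using that x' y' q' by auto
  define g where "g j = (if j < h then inv\<^bsub>E\<^esub> sect (x j) \<otimes>\<^bsub>E\<^esub> x' j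
                          else inv\<^bsub>E\<^esub> sect (y (j - h)) \<otimes>\<^bsub>E\<^esub> y' (j - h))" for j
  have "g j \<in> K" if j: "j < 2 * h" for j
  proof (cases "j < h")
    case True
    then show ?thesis using x'_i[OF True] by (simp add: g_def in_kernel_iff x_closed)
  next
    case False
    then have "j - h < h" using j by simp
    then show ?thesis using y'_i[of "j - h"] False by (simp add: g_def in_kernel_iff y_closed)
  qed
  then have \<gamma>: "restrict g {..<2 * h} \<in> carrier twists"
    by (simp add: restrict_PiE_iff)
  have "twist_x (restrict g {..<2 * h}) i = x' i" "twist_y (restrict g {..<2 * h}) i = y' i"
    if i: "i < h" for i
    using x'_i[OF i] y'_i[OF i] i by (simp_all add: twist_x_def twist_y_def g_def x_closed y_closed)
  then have "twisted (restrict g {..<2 * h}) = (x', y')"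
    using PiE_restrict[OF x'] PiE_restrict[OF y']
    by (simp add: twisted_def cong: restrict_cong)
  then show "p \<in> twisted ` carrier twists"
    unfolding p_eq by (rule image_eqI[OF sym \<gamma>])
qed

lemma inj_on_twisted: "inj_on twisted (carrier twists)"
proof (rule inj_onI)
  fix \<gamma> \<delta> assume \<gamma>: "\<gamma> \<in> carrier twists" and \<delta>: "\<delta> \<in> carrier twists"
    and eq: "twisted \<gamma> = twisted \<delta>"
  have "\<gamma> i = \<delta> i \<and> \<gamma> (h + i) = \<delta> (h + i)" if i: "i < h" for i
  proof -
    have "twist_x \<gamma> i = twist_x \<delta> i" "twist_y \<gamma> i = twist_y \<delta> i"
      using eq i by (auto simp: twisted_def fun_eq_iff split: if_splits)
    then show ?thesis
      using twist_in_kernel[OF \<gamma> i] twist_in_kernel[OF \<delta> i] i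
      by (simp add: twist_x_def twist_y_def x_closed y_closed kernel_closed)
  qed
  then have "\<gamma> j = \<delta> j" if j: "j < 2 * h" for j
  proof (cases "j < h")
    case False
    then have "j = h + (j - h)" "j - h < h" using j by auto
    then show ?thesis using \<open>\<And>i. i < h \<Longrightarrow> _\<close> by metis
  qed (use \<open>\<And>i. i < h \<Longrightarrow> _\<close> in blast)
  then show "\<gamma> = \<delta>"
    using \<gamma> \<delta> by (intro PiE_ext[of _ "{..<2 * h}"]) auto
qed

lemma lifts_eq_twisted_fiber:
  "lifts E q h x y = twisted ` {\<gamma> \<in> carrier twists. defect h \<gamma> = inv\<^bsub>E\<^esub> base_rel h}"
  using lifts_subset_twisted twisted_in_lifts_iff by auto

lemma lifts_nonempty_iff: "lifts E q h x y \<noteq> {} \<longleftrightarrow> base_rel h \<in> C"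
proof -
  have "lifts E q h x y \<noteq> {} \<longleftrightarrow> (\<exists>\<gamma>\<in>carrier twists. defect h \<gamma> = inv\<^bsub>E\<^esub> base_rel h)"
    unfolding lifts_eq_twisted_fiber by (simp add: Bex_def)
  also have "\<dots> \<longleftrightarrow> inv\<^bsub>E\<^esub> base_rel h \<in> defect h ` carrier twists"
    unfolding image_iff by (rule bex_cong[OF refl]) (rule eq_commute)
  also have "\<dots> \<longleftrightarrow> base_rel h \<in> C"
    using subgroup.m_inv_closed[OF C_subgroup] base_rel_in_kernel
    by (metis defect_image_eq_C E.inv_inv kernel_closed)
  finally show ?thesis .
qed

lemma card_lifts:
  assumes "lifts E q h x y \<noteq> {}"
  shows "real (card (lifts E q h x y)) = real (card K) ^ (2 * h) / real (card C)"
proof -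
  obtain \<gamma>\<^sub>0 where \<gamma>\<^sub>0: "\<gamma>\<^sub>0 \<in> carrier twists" "defect h \<gamma>\<^sub>0 = inv\<^bsub>E\<^esub> base_rel h"
    using assms unfolding lifts_eq_twisted_fiber by blast
  have "card (lifts E q h x y) = card (kernel twists KE (defect h))"
    unfolding lifts_eq_twisted_fiber
    using card_image[OF inj_on_subset[OF inj_on_twisted]] group_hom.card_fiber[OF defect_group_hom \<gamma>\<^sub>0(1)]
    by (simp add: \<gamma>\<^sub>0(2))
  moreover have "card C * card (kernel twists KE (defect h)) = card K ^ (2 * h)"
    using group_hom.card_image_mult_card_kernel[OF defect_group_hom] finite_kernel
    unfolding defect_image_eq_C by (simp add: card_PiE finite_PiE)
  moreover have "card C > 0"
    using C_subset_kernel finite_kernel subgroup.one_closed[OF C_subgroup]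
    by (metis card_gt_0_iff empty_iff finite_subset)
  ultimately show ?thesis
    by (simp add: field_simps flip: of_nat_mult of_nat_power)
qed

definition rel_block :: "nat \<Rightarrow> 'b" where
  "rel_block i = sect (surf_rel G x y i) \<otimes>\<^bsub>E\<^esub> grp_comm E (sect (x i)) (sect (y i))
                   \<otimes>\<^bsub>E\<^esub> inv\<^bsub>E\<^esub> sect (surf_rel G x y (Suc i))"

lemma rel_block_in_kernel: "i < h \<Longrightarrow> rel_block i \<in> K"
  using surf_rel_closed[of i] by (simp add: rel_block_def in_kernel_iff x_closed y_closed q.hom_grp_comm)

lemma prod_cls_rel_block:
  "n \<le> h \<Longrightarrow> (\<Otimes>\<^bsub>Q\<^esub>i\<in>{..<n}. cls (rel_block i))
     = cls (sect \<one>\<^bsub>G\<^esub> \<otimes>\<^bsub>E\<^esub> base_rel n \<otimes>\<^bsub>E\<^esub> inv\<^bsub>E\<^esub> sect (surf_rel G x y n))"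
proof (induction n)
  case 0
  then show ?case by (simp add: base_rel_def cls_one)
next
  case (Suc n)
  then have n: "n < h" by simp
  have tel: "sect \<one>\<^bsub>G\<^esub> \<otimes>\<^bsub>E\<^esub> base_rel n \<otimes>\<^bsub>E\<^esub> inv\<^bsub>E\<^esub> sect (surf_rel G x y n) \<in> K"
    using n surf_rel_closed[of n] by (simp add: in_kernel_iff base_rel_closed q_base_rel)
  have "(\<Otimes>\<^bsub>Q\<^esub>i\<in>{..<Suc n}. cls (rel_block i))
      = cls (rel_block n) \<otimes>\<^bsub>Q\<^esub> (\<Otimes>\<^bsub>Q\<^esub>i\<in>{..<n}. cls (rel_block i))"
    unfolding lessThan_Suc by (rule Q.finprod_insert) (use n rel_block_in_kernel in auto)
  also have "\<dots> = cls (sect \<one>\<^bsub>G\<^esub> \<otimes>\<^bsub>E\<^esub> base_rel n \<otimes>\<^bsub>E\<^esub> inv\<^bsub>E\<^esub> sect (surf_rel G x y n))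
      \<otimes>\<^bsub>Q\<^esub> cls (rel_block n)"
    unfolding Suc.IH[OF less_imp_le[OF n]]
    using tel rel_block_in_kernel[OF n] by (intro Q.m_comm cls_closed)
  also have "\<dots> = cls (sect \<one>\<^bsub>G\<^esub> \<otimes>\<^bsub>E\<^esub> base_rel (Suc n) \<otimes>\<^bsub>E\<^esub> inv\<^bsub>E\<^esub> sect (surf_rel G x y (Suc n)))"
    using tel rel_block_in_kernel[OF n] n surf_rel_closed[of n] surf_rel_closed[of "Suc n"]
    by (simp add: cls_mult[symmetric] rel_block_def base_rel_Suc base_rel_closed E.m_assoc
        x_closed y_closed del: surf_rel.simps)
  finally show ?case .
qed

lemma chain_eval_surf_cycle: "chain_eval Q factor_class (surf_cycle G x y h) = cls (base_rel h)"
proof -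
  let ?P = "surf_rel G x y"
  have "chain_eval Q factor_class (surf_cycle G x y h)
      = (\<Otimes>\<^bsub>Q\<^esub>i\<in>{..<h}. factor_class (?P i, x i) \<otimes>\<^bsub>Q\<^esub> factor_class (?P i \<otimes>\<^bsub>G\<^esub> x i, y i)
          \<otimes>\<^bsub>Q\<^esub> inv\<^bsub>Q\<^esub> factor_class (?P i \<otimes>\<^bsub>G\<^esub> x i \<otimes>\<^bsub>G\<^esub> y i \<otimes>\<^bsub>G\<^esub> inv\<^bsub>G\<^esub> x i, x i)
          \<otimes>\<^bsub>Q\<^esub> inv\<^bsub>Q\<^esub> factor_class (?P (Suc i), y i))"
    unfolding surf_cycle_eq_quad_chain
    by (rule Q.chain_eval_quad_chain[OF factor_class_closed finite_lessThan])
  also have "\<dots> = (\<Otimes>\<^bsub>Q\<^esub>i\<in>{..<h}. cls (rel_block i))"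
  proof (rule Q.finprod_cong')
    fix i assume "i \<in> {..<h}"
    then have i: "i < h" by simp
    have c: "?P i \<in> carrier G" "x i \<in> carrier G" "y i \<in> carrier G"
      using i surf_rel_closed[of i] x_closed y_closed by auto
    show "factor_class (?P i, x i) \<otimes>\<^bsub>Q\<^esub> factor_class (?P i \<otimes>\<^bsub>G\<^esub> x i, y i)
          \<otimes>\<^bsub>Q\<^esub> inv\<^bsub>Q\<^esub> factor_class (?P i \<otimes>\<^bsub>G\<^esub> x i \<otimes>\<^bsub>G\<^esub> y i \<otimes>\<^bsub>G\<^esub> inv\<^bsub>G\<^esub> x i, x i)
          \<otimes>\<^bsub>Q\<^esub> inv\<^bsub>Q\<^esub> factor_class (?P (Suc i), y i) = cls (rel_block i)"
      unfolding rel_block_def surf_rel.simps(2) factor_set_surf_block[OF c, symmetric]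
      using c by (simp add: factor_class_def factor_set_in_kernel cls_mult cls_inv kernel_mult kernel_inv)
  qed (use rel_block_in_kernel in auto)
  also have "\<dots> = cls (sect \<one>\<^bsub>G\<^esub> \<otimes>\<^bsub>E\<^esub> base_rel h \<otimes>\<^bsub>E\<^esub> inv\<^bsub>E\<^esub> sect (surf_rel G x y h))"
    by (rule prod_cls_rel_block) simp
  also have "\<dots> = cls (base_rel h)"
    using base_rel_in_kernel cls_conjug[of "sect \<one>\<^bsub>G\<^esub>" "base_rel h"]
    by (simp add: surf_rel_eq_one conjug_def)
  finally show ?thesis .
qed

lemma in_image_H2_imp_base_rel_in_C:
  assumes "in_image_H2 E G q (surf_cycle G x y h)"
  shows "base_rel h \<in> C"
proof -
  have "cls (base_rel h) = \<one>\<^bsub>Q\<^esub>"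
    using chain_eval_in_image_H2[OF assms finite_supp_surf_cycle] chain_eval_surf_cycle by simp
  then show ?thesis
    using cls_eq_one_iff[OF base_rel_in_kernel] by simp
qed

end

theorem theorem3p1:
  fixes G' :: "('b, 'n) monoid_scheme" and G :: "('a, 'm) monoid_scheme"
    and q :: "'b \<Rightarrow> 'a" and h :: nat and x y :: "nat \<Rightarrow> 'a"
  assumes "group G'" and "group G"
    and "q \<in> hom G' G" and "q ` carrier G' = carrier G"
    and "finite (kernel G' G q)"
    and "comm_group (G'\<lparr>carrier := kernel G' G q\<rparr>)"
    and "h \<ge> 1"
    and "surf_epi G h x y"
  shows "(lifts G' q h x y \<noteq> {} \<longleftrightarrow> in_image_H2 G' G q (surf_cycle G x y h))
       \<and> (lifts G' q h x y \<noteq> {} \<longrightarrow>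
           real (card (lifts G' q h x y))
             = real (card (kernel G' G q)) ^ (2 * h)
               / real (card (comm_subgroup G' (kernel G' G q))))"
proof -
  interpret surface_lifting G' G q h x y
    using assms by (simp add: surface_lifting_def surface_lifting_axioms_def abelian_extension_def
        abelian_extension_axioms_def)
  have "lifts G' q h x y \<noteq> {} \<longleftrightarrow> in_image_H2 G' G q (surf_cycle G x y h)"
  proof
    assume "lifts G' q h x y \<noteq> {}"
    then obtain x' y' where "(x', y') \<in> lifts G' q h x y" by auto
    then show "in_image_H2 G' G q (surf_cycle G x y h)"
      by (rule q.in_image_H2_of_lift)
  next
    assume "in_image_H2 G' G q (surf_cycle G x y h)"
    then show "lifts G' q h x y \<noteq> {}"
      using in_image_H2_imp_base_rel_in_C lifts_nonempty_iff by blast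
  qed
  then show ?thesis
    using card_lifts by blast
qed

end
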